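(* Let $\Omega\subset\mathbb{R}^d$ be a bounded open set, let $q\ge 1$ be an integer, let $\lambda\in\mathbb{R}\setminus\{0\}$, let $k\in C^q(\overline{\Omega}\times\overline{\Omega})$ and let $f\in C^q(\overline{\Omega})$ be a nonzero function. Assume: (1) $\lambda$ does not belong to the spectrum of the integral operator $\mathcal{K}\colon C^0(\overline{\Omega})\to C^0(\overline{\Omega})$, $(\mathcal{K}v)(x)=\int_\Omega k(x,y)v(y)\,dy$; let $u\in C^q(\overline{\Omega})$ denote the unique solution of $\lambda u(x)-\int_\Omega k(x,y)u(y)\,dy=f(x)$, $x\in\Omega$. (2) The quadrature scheme $\{(Y_{\vec h},\vec w_{\vec h})\}$ is stable with constant $C_Q$ and convergent with order $q_w$, where $0<q_w\le q$, with constant $C_w$. (3) The reconstruction scheme $\{(X_{\vec h},Y_{\vec h},R_{\vec h})\}$ is stable and convergent with order $q_R$, where $0<q_R\le q$, with constant $C_R$. Then there exist $\delta>0$ and a constant $C>0$ independent of $h_X,h_Y$ such that for all $h_X,h_Y\in(0,\delta)$: the linear system \[ A_{\vec h}\hat{\vec u}_{\vec h}:=(\lambda I_{\vec h}-K_{\vec h}W_{\vec h}R_{\vec h})\hat{\vec u}_{\vec h}=f|_{X_{\vec h}} \] has a unique solution; the condition number of $A_{\vec h}$ in the $\infty$-norm is bounded independently of $\vec h$; and the Nyström interpolant \[ u_{\vec h}(x)=\frac{1}{\lambda}\Big(\sum_{i=1}^{|Y_{\vec h}|} w_{\vec h,i}\,k(x,y_{\vec h,i})\sum_{j=1}^{|X_{\vec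 h}|}(R_{\vec h})_{ij}\hat u_{\vec h,j}+f(x)\Big) \] satisfies \[ \|u-u_{\vec h}\|_\infty\le C\Big(C_w\,\max_{x\in\overline{\Omega}}\|k(x,\cdot)\|_{C^q(\overline{\Omega})}\,h_Y^{q_w}+C_QC_R\,\|k\|_{C^0(\overline{\Omega}\times\overline{\Omega})}\,h_X^{q_R}\Big)\|u\|_{C^q(\overline{\Omega})}. \]
   Context: For an integer $m\ge0$, $C^m(\overline{\Omega})$ is the space of functions on $\Omega$ whose partial derivatives $\partial^\alpha v$, $|\alpha|\le m$, exist, are continuous on $\Omega$ and extend continuously to $\overline{\Omega}$, normed by $\|v\|_{C^m(\overline{\Omega})}=\sum_{|\alpha|\le m}\frac{1}{\alpha!}\max_{x\in\overline{\Omega}}|\partial^\alpha v(x)|$ (multi-index notation, $\alpha!=\prod\alpha_i!$); $\|v\|_\infty=\max_{\overline\Omega}|v|$, and $\|k\|_{C^0(\overline\Omega\times\overline\Omega)}=\max|k|$. Here $\vec h=(h_X,h_Y)$ with $h_X,h_Y>0$. A quadrature scheme is a family $\{(Y_{\vec h},\vec w_{\vec h})\}$ of finite node sets $Y_{\vec h}=\{y_{\vec h,i}\}\subset\overline{\Omega}$ and weights $\vec w_{\vec h}\in\mathbb{R}^{|Y_{\vec h}|}$ depending only on $h_Y$, with $|Y_{\vec h}|\to\infty$ as $h_Y\to0^+$. It is stable if $\|\vec w_{\vec h}\|_1\le C_Q$ for all $\vec h$, and convergent with order $q_w$ if $|\int_\Omega v-\sum_i w_{\vec h,i}v(y_{\vec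 h,i})|\le C_w h_Y^{q_w}\|v\|_{C^{q_w}(\overline{\Omega})}$ for all $\vec h$ and all $v\in C^{q_w}(\overline{\Omega})$. A reconstruction scheme is a family of triples $(X_{\vec h},Y_{\vec h},R_{\vec h})$, $h_X,h_Y>0$, where $X_{\vec h}=\{x_{\vec h,j}\}\subset\overline{\Omega}$ is a finite set depending only on $h_X$ (solution nodes), $Y_{\vec h}$ are the quadrature nodes above, and $R_{\vec h}$ is a real $|Y_{\vec h}|\times|X_{\vec h}|$ matrix. It is stable if $\|R_{\vec h}\|_\infty\le C_I$ (max absolute row sum) for all $\vec h$, and convergent with order $q_R$ if $\|v|_{Y_{\vec h}}-R_{\vec h}v|_{X_{\vec h}}\|_\infty\le C_R h_X^{q_R}\|v\|_{C^{q_R}(\overline{\Omega})}$ for all $\vec h$ and all $v\in C^{q_R}(\overline{\Omega})$, where $v|_S$ denotes the vector of values of $v$ at the points of $S$. $I_{\vec h}$ is the $|X_{\vec h}|\times|X_{\vec h}|$ identity, $(K_{\vec h})_{ij}=k(x_{\vec h,i},y_{\vec h,j})$, $W_{\vec h}=\mathrm{diag}(\vec w_{\vec h})$. *)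

theory Defs
  imports "HOL-Analysis.Analysis"
begin

definition pder :: "'a::euclidean_space \<Rightarrow> ('a \<Rightarrow> real) \<Rightarrow> 'a \<Rightarrow> real" where
  "pder b v x = deriv (\<lambda>t. v (x + t *\<^sub>R b)) 0"

fun CmExt :: "'a::euclidean_space set \<Rightarrow> nat \<Rightarrow> ('a \<Rightarrow> real) \<Rightarrow> bool" where
  "CmExt \<Omega> 0 v = (\<exists>g. continuous_on (closure \<Omega>) g \<and> (\<forall>x\<in>\<Omega>. g x = v x))"
| "CmExt \<Omega> (Suc m) v = (CmExt \<Omega> 0 v
      \<and> (\<forall>b\<in>Basis. \<forall>x\<in>\<Omega>. (\<lambda>t. v (x + t *\<^sub>R b)) differentiable (at 0))
      \<and> (\<forall>b\<in>Basis. CmExt \<Omega> m (pder b v)))"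

definition Cm :: "'a::euclidean_space set \<Rightarrow> nat \<Rightarrow> ('a \<Rightarrow> real) \<Rightarrow> bool" where
  "Cm \<Omega> m v \<longleftrightarrow> continuous_on (closure \<Omega>) v \<and> CmExt \<Omega> m v"

definition basis_list :: "'a::euclidean_space list" where
  "basis_list = (SOME xs. distinct xs \<and> set xs = Basis)"

text \<open>Multi-index derivative (multi-indices are functions Basis -> nat, zero off Basis).\<close>
definition dpart :: "('a::euclidean_space \<Rightarrow> nat) \<Rightarrow> ('a \<Rightarrow> real) \<Rightarrow> 'a \<Rightarrow> real" where
  "dpart \<alpha> v = fold (\<lambda>b g. (pder b ^^ \<alpha> b) g) basis_list v"

definition mindex :: "nat \<Rightarrow> ('a::euclidean_space \<Rightarrow> nat) set" where
  "mindex m = {\<alpha>. (\<forall>b. b \<notin> Basis \<longrightarrow> \<alpha> b = 0) \<and> (\<Sum>b\<in>Basis. \<alpha> b) \<le> m}"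

text \<open>The C^m(closure Omega) norm; the max over closure Omega of the continuous extension of
  a derivative equals its sup over Omega.\<close>
definition cmnorm :: "'a::euclidean_space set \<Rightarrow> nat \<Rightarrow> ('a \<Rightarrow> real) \<Rightarrow> real" where
  "cmnorm \<Omega> m v = (\<Sum>\<alpha>\<in>mindex m.
      (1 / real (\<Prod>b\<in>Basis. fact (\<alpha> b))) * (SUP x\<in>\<Omega>. \<bar>dpart \<alpha> v x\<bar>))"

definition intop :: "'a::euclidean_space set \<Rightarrow> ('a \<times> 'a \<Rightarrow> real) \<Rightarrow> real \<Rightarrow> ('a \<Rightarrow> real) \<Rightarrow> 'a \<Rightarrow> real" where
  "intop \<Omega> k lam v = (\<lambda>x. lam * v x - integral \<Omega> (\<lambda>y. k (x, y) * v y))"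

definition sup_norm :: "'a set \<Rightarrow> ('a \<Rightarrow> real) \<Rightarrow> real" where
  "sup_norm S v = (SUP x\<in>S. \<bar>v x\<bar>)"

definition notin_spectrum :: "'a::euclidean_space set \<Rightarrow> ('a \<times> 'a \<Rightarrow> real) \<Rightarrow> real \<Rightarrow> bool" where
  "notin_spectrum \<Omega> k lam \<longleftrightarrow>
     (\<forall>g. continuous_on (closure \<Omega>) g \<longrightarrow>
        (\<exists>v. continuous_on (closure \<Omega>) v \<and> (\<forall>x\<in>closure \<Omega>. intop \<Omega> k lam v x = g x)))
   \<and> (\<forall>v. continuous_on (closure \<Omega>) v \<and> (\<forall>x\<in>closure \<Omega>. intop \<Omega> k lam v x = 0)
        \<longrightarrow> (\<forall>x\<in>closure \<Omega>. v x = 0))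
   \<and> (\<exists>M. \<forall>v. continuous_on (closure \<Omega>) v \<longrightarrow>
        sup_norm (closure \<Omega>) v \<le> M * sup_norm (closure \<Omega>) (intop \<Omega> k lam v))"

definition mat_inf_norm :: "nat \<Rightarrow> nat \<Rightarrow> (nat \<Rightarrow> nat \<Rightarrow> real) \<Rightarrow> real" where
  "mat_inf_norm m n A = Max (insert 0 {(\<Sum>j<n. \<bar>A i j\<bar>) | i. i < m})"

definition is_inverse :: "nat \<Rightarrow> (nat \<Rightarrow> nat \<Rightarrow> real) \<Rightarrow> (nat \<Rightarrow> nat \<Rightarrow> real) \<Rightarrow> bool" where
  "is_inverse n A B \<longleftrightarrow> (\<forall>i<n. \<forall>j<n.
      (\<Sum>l<n. A i l * B l j) = (if i = j then 1 else 0) \<and>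
      (\<Sum>l<n. B i l * A l j) = (if i = j then 1 else 0))"

definition cond_inf :: "nat \<Rightarrow> (nat \<Rightarrow> nat \<Rightarrow> real) \<Rightarrow> real" where
  "cond_inf n A = mat_inf_norm n n A * mat_inf_norm n n (SOME B. is_inverse n A B)"

text \<open>A = lam I - K W R, with K_il = k(x_i, y_l), W = diag w.\<close>
definition sysmat :: "real \<Rightarrow> ('a \<times> 'a \<Rightarrow> real) \<Rightarrow> (nat \<Rightarrow> 'a) \<Rightarrow> (nat \<Rightarrow> 'a) \<Rightarrow> nat
    \<Rightarrow> (nat \<Rightarrow> real) \<Rightarrow> (nat \<Rightarrow> nat \<Rightarrow> real) \<Rightarrow> nat \<Rightarrow> nat \<Rightarrow> real" where
  "sysmat lam k Xs Ys nYs ws Rm = (\<lambda>i j.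
     (if i = j then lam else 0) - (\<Sum>l<nYs. k (Xs i, Ys l) * ws l * Rm l j))"

definition nystrom :: "real \<Rightarrow> ('a \<times> 'a \<Rightarrow> real) \<Rightarrow> ('a \<Rightarrow> real) \<Rightarrow> (nat \<Rightarrow> 'a) \<Rightarrow> nat
    \<Rightarrow> nat \<Rightarrow> (nat \<Rightarrow> real) \<Rightarrow> (nat \<Rightarrow> nat \<Rightarrow> real) \<Rightarrow> (nat \<Rightarrow> real) \<Rightarrow> 'a \<Rightarrow> real" where
  "nystrom lam k f Ys nYs nXs ws Rm uh = (\<lambda>x.
     (1 / lam) * ((\<Sum>i<nYs. ws i * k (x, Ys i) * (\<Sum>j<nXs. Rm i j * uh j)) + f x))"

end

theory Submission
  imports Defs "Jordan_Normal_Form.Determinant"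
begin

text \<open>Write K for the integral operator and K_h c = \<Sum>_i w_i k(-, y_i) (R c)_i for its discretisation
  acting on nodal values c, so that the system matrix is c \<mapsto> \<lambda> c - (K_h c)|_X. For a smooth
  function g, K g - K_h (g|_X) is a quadrature error plus a weighted reconstruction error. Applied to
  the sections k(-, y_l) this makes K_h ((K_h c)|_X) - K (K_h c) small relative to max |c|, so the
  resolvent bound of \<lambda> - K transfers to a uniform stability bound for the system matrix once
  h_X, h_Y are small. Stability yields unique solvability and the bound on the condition number,
  and the Nystroem error is the consistency residual \<lambda> u - f - K_h (u|_X) = K u - K_h (u|_X) pushed
  through the stable discrete resolvent. The derivative bounds of the sections of k, uniform in the
  section parameter up to the boundary, come from the continuous extensions of the derivatives of k
  to the closed product.\<close>

section \<open>Stable matrices\<close>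

lemma mat_inf_norm_nonneg: "0 \<le> mat_inf_norm m n A"
  unfolding mat_inf_norm_def by (rule Max_ge) auto

lemma mat_inf_norm_le:
  assumes "\<And>i. i < m \<Longrightarrow> (\<Sum>j<n. \<bar>A i j\<bar>) \<le> c" and "0 \<le> c"
  shows "mat_inf_norm m n A \<le> c"
  unfolding mat_inf_norm_def using assms by (subst Max_le_iff) auto

lemma is_inverse_exists:
  fixes A :: "nat \<Rightarrow> nat \<Rightarrow> real"
  assumes inj: "\<And>c. \<forall>i<n. (\<Sum>j<n. A i j * c j) = 0 \<Longrightarrow> \<forall>j<n. c j = 0"
  shows "\<exists>B. is_inverse n A B"
proof -
  define A' where "A' = mat n n (\<lambda>(i, j). A i j)"
  have A': "A' \<in> carrier_mat n n" unfolding A'_def by simp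
  have "Determinant.det A' \<noteq> 0"
  proof
    assume "Determinant.det A' = 0"
    then obtain v where v: "v \<in> carrier_vec n" "v \<noteq> 0\<^sub>v n" "A' *\<^sub>v v = 0\<^sub>v n"
      using det_0_iff_vec_prod_zero[OF A'] by blast
    have "(\<Sum>j<n. A i j * v $ j) = 0" if "i < n" for i
    proof -
      have "(A' *\<^sub>v v) $ i = 0" using v(3) that by simp
      then show ?thesis
        using that v(1) unfolding A'_def
        by (simp add: mult_mat_vec_def scalar_prod_def row_def atLeast0LessThan)
    qed
    then have "\<forall>j<n. v $ j = 0" using inj[of "\<lambda>j. v $ j"] by blast
    then have "v = 0\<^sub>v n" using v(1) by (intro eq_vecI) auto
    with v(2) show False by simp
  qed
  then have "A' \<in> Units (ring_mat TYPE(real) n ())"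
    by (rule det_non_zero_imp_unit[OF A'])
  then obtain B' where B': "B' \<in> carrier_mat n n" "B' * A' = 1\<^sub>m n" "A' * B' = 1\<^sub>m n"
    unfolding Units_def ring_mat_def by auto
  have "is_inverse n A (\<lambda>i j. B' $$ (i, j))" unfolding is_inverse_def
  proof (intro allI impI conjI)
    fix i j assume ij: "i < n" "j < n"
    have "(A' * B') $$ (i, j) = (if i = j then 1 else 0)" using B'(3) ij by simp
    then show "(\<Sum>l<n. A i l * B' $$ (l, j)) = (if i = j then 1 else 0)"
      using ij B'(1) unfolding A'_def by (simp add: scalar_prod_def row_def col_def atLeast0LessThan)
    have "(B' * A') $$ (i, j) = (if i = j then 1 else 0)" using B'(2) ij by simp
    then show "(\<Sum>l<n. B' $$ (i, l) * A l j) = (if i = j then 1 else 0)"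
      using ij B'(1) unfolding A'_def by (simp add: scalar_prod_def row_def col_def atLeast0LessThan)
  qed
  then show ?thesis by blast
qed

context
  fixes A :: "nat \<Rightarrow> nat \<Rightarrow> real" and n :: nat and M :: real
  assumes M_nonneg: "0 \<le> M"
    and stable: "\<And>c T. 0 \<le> T \<Longrightarrow> \<forall>i<n. \<bar>\<Sum>j<n. A i j * c j\<bar> \<le> T \<Longrightarrow> \<forall>j<n. \<bar>c j\<bar> \<le> M * T"
begin

lemma stable_imp_is_inverse_exists: "\<exists>B. is_inverse n A B"
  by (rule is_inverse_exists) (use stable[of 0] in auto)

lemma stable_imp_inverse_inf_norm_le:
  assumes inv: "is_inverse n A B"
  shows "mat_inf_norm n n B \<le> M"
proof (rule mat_inf_norm_le[OF _ M_nonneg])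
  fix i assume i: "i < n"
  \<comment> \<open>test the stability bound on the column combination of B with the sign pattern of row i\<close>
  define \<sigma> where "\<sigma> j = sgn (B i j)" for j
  define c where "c l = (\<Sum>j<n. B l j * \<sigma> j)" for l
  have "\<bar>\<Sum>l<n. A i' l * c l\<bar> \<le> 1" if "i' < n" for i'
  proof -
    have "(\<Sum>l<n. A i' l * c l) = (\<Sum>l<n. \<Sum>j<n. A i' l * B l j * \<sigma> j)"
      unfolding c_def by (simp add: sum_distrib_left mult.assoc)
    also have "\<dots> = (\<Sum>j<n. \<Sum>l<n. A i' l * B l j * \<sigma> j)" by (rule sum.swap)
    also have "\<dots> = (\<Sum>j<n. (\<Sum>l<n. A i' l * B l j) * \<sigma> j)" by (simp add: sum_distrib_right)
    also have "\<dots> = (\<Sum>j<n. if i' = j then \<sigma> j else 0)"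
      using inv that unfolding is_inverse_def by (intro sum.cong) auto
    also have "\<dots> = \<sigma> i'" using that by simp
    finally show ?thesis by (simp add: \<sigma>_def abs_sgn_eq)
  qed
  then have "\<bar>c i\<bar> \<le> M" using stable[of 1 c] i by auto
  moreover have "c i = (\<Sum>j<n. \<bar>B i j\<bar>)"
    unfolding c_def \<sigma>_def by (intro sum.cong refl) (metis abs_sgn)
  ultimately show "(\<Sum>j<n. \<bar>B i j\<bar>) \<le> M" by simp
qed

lemma stable_imp_cond_inf_le: "cond_inf n A \<le> mat_inf_norm n n A * M"
proof -
  have "is_inverse n A (SOME B. is_inverse n A B)"
    using stable_imp_is_inverse_exists by (rule someI_ex)
  then show ?thesis
    unfolding cond_inf_def
    by (intro mult_left_mono mat_inf_norm_nonneg stable_imp_inverse_inf_norm_le)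
qed

lemma stable_imp_solvable: "\<exists>x. \<forall>i<n. (\<Sum>j<n. A i j * x j) = b i"
proof -
  obtain B where B: "is_inverse n A B" using stable_imp_is_inverse_exists by blast
  have "(\<Sum>j<n. A i j * (\<Sum>l<n. B j l * b l)) = b i" if i: "i < n" for i
  proof -
    have "(\<Sum>j<n. A i j * (\<Sum>l<n. B j l * b l)) = (\<Sum>j<n. \<Sum>l<n. A i j * B j l * b l)"
      by (simp add: sum_distrib_left mult.assoc)
    also have "\<dots> = (\<Sum>l<n. \<Sum>j<n. A i j * B j l * b l)" by (rule sum.swap)
    also have "\<dots> = (\<Sum>l<n. (\<Sum>j<n. A i j * B j l) * b l)" by (simp add: sum_distrib_right)
    also have "\<dots> = (\<Sum>l<n. if i = l then b l else 0)"
      using B i unfolding is_inverse_def by (intro sum.cong) auto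
    finally show ?thesis using i by simp
  qed
  then show ?thesis by (intro exI[of _ "\<lambda>j. \<Sum>l<n. B j l * b l"]) simp
qed

lemma stable_imp_solution_unique:
  assumes "\<forall>i<n. (\<Sum>j<n. A i j * x j) = b i" and "\<forall>i<n. (\<Sum>j<n. A i j * x' j) = b i"
  shows "\<forall>j<n. x j = x' j"
proof -
  have "\<forall>i<n. \<bar>\<Sum>j<n. A i j * (x j - x' j)\<bar> \<le> 0"
    using assms by (simp add: right_diff_distrib sum_subtractf)
  then show ?thesis using stable[of 0 "\<lambda>j. x j - x' j"] by simp
qed

end


section \<open>Partial derivatives\<close>

lemma eventually_line_eq:
  fixes v v' :: "'a::real_normed_vector \<Rightarrow> real"
  assumes "open S" "x \<in> S" "\<forall>y\<in>S. v y = v' y"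
  shows "\<forall>\<^sub>F t in nhds 0. v (x + t *\<^sub>R b) = v' (x + t *\<^sub>R b)"
proof -
  have "open ((\<lambda>t::real. x + t *\<^sub>R b) -` S)"
    by (rule continuous_open_vimage[OF assms(1)]) (intro continuous_intros)
  then have "\<forall>\<^sub>F t in nhds 0. x + t *\<^sub>R b \<in> S"
    using eventually_nhds_in_open[of "(\<lambda>t::real. x + t *\<^sub>R b) -` S" 0] assms(2) by simp
  then show ?thesis by (rule eventually_mono) (use assms(3) in auto)
qed

lemma pder_cong:
  assumes "open S" "x \<in> S" "\<forall>y\<in>S. v y = v' y"
  shows "pder b v x = pder b v' x"
  unfolding pder_def using eventually_line_eq[OF assms] by (rule deriv_cong_ev) simp

lemma line_differentiable_cong:
  fixes v v' :: "'a::euclidean_space \<Rightarrow> real"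
  assumes "open S" "x \<in> S" "\<forall>y\<in>S. v y = v' y"
    and "(\<lambda>t. v (x + t *\<^sub>R b)) differentiable (at 0)"
  shows "(\<lambda>t. v' (x + t *\<^sub>R b)) differentiable (at 0)"
proof -
  obtain D where "((\<lambda>t. v (x + t *\<^sub>R b)) has_real_derivative D) (at 0)"
    using assms(4) DERIV_deriv_iff_real_differentiable by blast
  then have "((\<lambda>t. v' (x + t *\<^sub>R b)) has_real_derivative D) (at 0)"
    using DERIV_cong_ev[OF refl eventually_line_eq[OF assms(1-3)] refl] by blast
  then show ?thesis using real_differentiable_def by blast
qed

lemma line_has_real_derivative_pder:
  assumes "(\<lambda>t. v (x + t *\<^sub>R b)) differentiable (at 0)"
  shows "((\<lambda>t. v (x + t *\<^sub>R b)) has_real_derivative pder b v x) (at 0)"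
  using assms DERIV_deriv_iff_real_differentiable unfolding pder_def by blast

context
  fixes F G :: "'a::euclidean_space \<Rightarrow> real" and x b :: 'a
  assumes F: "(\<lambda>t. F (x + t *\<^sub>R b)) differentiable (at 0)"
    and G: "(\<lambda>t. G (x + t *\<^sub>R b)) differentiable (at 0)"
begin

lemma
  shows pder_add: "pder b (\<lambda>y. F y + G y) x = pder b F x + pder b G x"
    and line_differentiable_add: "(\<lambda>t. F (x + t *\<^sub>R b) + G (x + t *\<^sub>R b)) differentiable (at 0)"
proof -
  have "((\<lambda>t. F (x + t *\<^sub>R b) + G (x + t *\<^sub>R b)) has_real_derivative pder b F x + pder b G x) (at 0)"
    using line_has_real_derivative_pder[OF F] line_has_real_derivative_pder[OF G] by (rule DERIV_add)
  then show "pder b (\<lambda>y. F y + G y) x = pder b F x + pder b G x"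
    and "(\<lambda>t. F (x + t *\<^sub>R b) + G (x + t *\<^sub>R b)) differentiable (at 0)"
    unfolding pder_def using DERIV_imp_deriv real_differentiable_def by blast+
qed

lemma
  shows pder_mult: "pder b (\<lambda>y. F y * G y) x = pder b F x * G x + F x * pder b G x"
    and line_differentiable_mult: "(\<lambda>t. F (x + t *\<^sub>R b) * G (x + t *\<^sub>R b)) differentiable (at 0)"
proof -
  have "((\<lambda>t. F (x + t *\<^sub>R b) * G (x + t *\<^sub>R b))
      has_real_derivative pder b F x * G x + F x * pder b G x) (at 0)"
    using DERIV_mult[OF line_has_real_derivative_pder[OF F] line_has_real_derivative_pder[OF G]]
    by (simp add: mult.commute)
  then show "pder b (\<lambda>y. F y * G y) x = pder b F x * G x + F x * pder b G x"
    and "(\<lambda>t. F (x + t *\<^sub>R b) * G (x + t *\<^sub>R b)) differentiable (at 0)"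
    unfolding pder_def using DERIV_imp_deriv real_differentiable_def by blast+
qed

end

lemma CmExt_cong:
  assumes "open S" "CmExt S m v" "\<forall>x\<in>S. v x = v' x"
  shows "CmExt S m v'"
  using assms(2,3)
proof (induction m arbitrary: v v')
  case 0
  then show ?case by auto
next
  case (Suc m)
  have "CmExt S m (pder b v')" if "b \<in> Basis" for b
  proof -
    have "\<forall>x\<in>S. pder b v x = pder b v' x" using pder_cong[OF assms(1)] Suc.prems(2) by blast
    moreover have "CmExt S m (pder b v)" using Suc.prems(1) that by simp
    ultimately show ?thesis using Suc.IH by blast
  qed
  moreover have "(\<lambda>t. v' (x + t *\<^sub>R b)) differentiable (at 0)" if "b \<in> Basis" "x \<in> S" for b x
    using line_differentiable_cong[OF assms(1) that(2), of v v' b] Suc.prems that by simp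
  ultimately show ?case using Suc.prems by auto
qed


section \<open>Multi-index derivatives and the norm of C^m\<close>

lemma distinct_set_basis_list:
  "distinct (basis_list :: 'a::euclidean_space list) \<and> set basis_list = (Basis :: 'a set)"
proof -
  have "\<exists>xs. distinct xs \<and> set xs = (Basis :: 'a set)"
    using finite_distinct_list[OF finite_Basis] by blast
  then show ?thesis unfolding basis_list_def by (rule someI_ex)
qed

definition pder_word :: "('a::euclidean_space \<Rightarrow> nat) \<Rightarrow> 'a list" where
  "pder_word \<alpha> = concat (map (\<lambda>b. replicate (\<alpha> b) b) basis_list)"

lemma dpart_eq_fold_pder_word: "dpart \<alpha> v = fold pder (pder_word \<alpha>) v"
proof -
  have funpow: "(pder b ^^ n) g = fold pder (replicate n b) g" for b n and g :: "'a \<Rightarrow> real"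
    by (induction n arbitrary: g) (simp_all add: funpow_Suc_right del: funpow.simps)
  have fold_concat: "fold (\<lambda>b. fold pder (L b)) bs g = fold pder (concat (map L bs)) g"
    for L :: "'a \<Rightarrow> 'a list" and bs g
    by (induction bs arbitrary: g) auto
  show ?thesis unfolding dpart_def pder_word_def funpow by (rule fold_concat)
qed

lemma set_pder_word: "set (pder_word \<alpha>) \<subseteq> Basis"
proof -
  have "set basis_list = (Basis :: 'a set)" using distinct_set_basis_list by blast
  then show ?thesis unfolding pder_word_def by force
qed

lemma length_pder_word:
  assumes "\<alpha> \<in> mindex m"
  shows "length (pder_word \<alpha>) \<le> m"
proof -
  have "length (pder_word \<alpha>) = sum_list (map \<alpha> basis_list)"
    unfolding pder_word_def by (simp add: length_concat comp_def)
  also have "\<dots> = (\<Sum>b\<in>Basis. \<alpha> b)"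
    using distinct_set_basis_list by (metis sum_list_distinct_conv_sum_set)
  finally show ?thesis using assms unfolding mindex_def by simp
qed

lemma finite_mindex: "finite (mindex m :: ('a::euclidean_space \<Rightarrow> nat) set)"
proof -
  \<comment> \<open>a multi-index is determined by its restriction to Basis, which lies in a finite function space\<close>
  have "inj_on (\<lambda>\<alpha>. restrict \<alpha> Basis) (mindex m :: ('a \<Rightarrow> nat) set)"
    by (rule inj_onI) (simp add: mindex_def fun_eq_iff restrict_def split: if_splits, metis)
  moreover have "(\<lambda>\<alpha>. restrict \<alpha> Basis) ` (mindex m :: ('a \<Rightarrow> nat) set) \<subseteq> PiE Basis (\<lambda>_. {..m})"
  proof clarify
    fix \<alpha> :: "'a \<Rightarrow> nat" assume "\<alpha> \<in> mindex m"
    moreover have "\<alpha> b \<le> (\<Sum>b\<in>Basis. \<alpha> b)" if "b \<in> Basis" for b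
      using that by (intro member_le_sum) auto
    ultimately show "restrict \<alpha> Basis \<in> PiE Basis (\<lambda>_. {..m})"
      unfolding mindex_def by fastforce
  qed
  ultimately show ?thesis
    using finite_subset finite_imageD finite_PiE[OF finite_Basis, of "\<lambda>_. {..m}"] by blast
qed

lemma zero_in_mindex: "(\<lambda>_. 0) \<in> mindex m"
  unfolding mindex_def by simp

lemma mindex_0: "mindex 0 = {(\<lambda>_. 0) :: 'a::euclidean_space \<Rightarrow> nat}"
  by (auto simp: mindex_def fun_eq_iff)

lemma dpart_zero: "dpart (\<lambda>_. 0) v = v"
  unfolding dpart_eq_fold_pder_word pder_word_def by (simp add: map_replicate_const)

lemma cmnorm_0: "cmnorm S 0 v = (SUP x\<in>S. \<bar>v x\<bar>)"
  unfolding cmnorm_def mindex_0 by (simp add: dpart_zero)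

lemma abs_le_cmnorm_0:
  assumes "bounded S" "continuous_on (closure S) v" "x \<in> closure S"
  shows "\<bar>v x\<bar> \<le> cmnorm S 0 v"
proof -
  have "bounded (v ` closure S)"
    using assms(1,2) by (simp add: compact_continuous_image compact_imp_bounded)
  then have "bdd_above ((\<lambda>x. \<bar>v x\<bar>) ` S)"
    using closure_subset by (fastforce simp: bounded_iff intro: bdd_aboveI2)
  then have "\<forall>y\<in>S. \<bar>v y\<bar> \<le> cmnorm S 0 v" unfolding cmnorm_0 by (auto intro: cSUP_upper)
  then show ?thesis
    using continuous_le_on_closure[OF continuous_on_rabs[OF assms(2)] assms(3)] by blast
qed

lemma cmnorm_vanishing:
  assumes "open S" "S \<noteq> {}" "\<forall>x\<in>S. v x = 0"
  shows "cmnorm S m v = 0"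
proof -
  have "\<forall>x\<in>S. fold pder bs v x = 0" for bs
    using assms(3)
  proof (induction bs arbitrary: v)
    case (Cons b bs)
    have "\<forall>x\<in>S. pder b v x = pder b (\<lambda>_. 0) x" using pder_cong[OF assms(1) _ Cons.prems] by blast
    then have "\<forall>x\<in>S. pder b v x = 0" unfolding pder_def by simp
    then show ?case using Cons.IH by simp
  qed simp
  then have "(SUP x\<in>S. \<bar>dpart \<alpha> v x\<bar>) = (SUP x\<in>S. 0)" for \<alpha>
    unfolding dpart_eq_fold_pder_word by (intro SUP_cong) auto
  then show ?thesis unfolding cmnorm_def using assms(2) by simp
qed


section \<open>Families of functions with uniformly bounded derivatives\<close>

fun uniform_Cm :: "'a::euclidean_space set \<Rightarrow> 'p set \<Rightarrow> nat \<Rightarrow> ('p \<Rightarrow> 'a \<Rightarrow> real) \<Rightarrow> bool" where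
  "uniform_Cm S P 0 F \<longleftrightarrow> (\<exists>B. \<forall>p\<in>P. \<forall>x\<in>S. \<bar>F p x\<bar> \<le> B) \<and> (\<forall>p\<in>P. CmExt S 0 (F p))"
| "uniform_Cm S P (Suc m) F \<longleftrightarrow> uniform_Cm S P 0 F
      \<and> (\<forall>p\<in>P. \<forall>b\<in>Basis. \<forall>x\<in>S. (\<lambda>t. F p (x + t *\<^sub>R b)) differentiable (at 0))
      \<and> (\<forall>b\<in>Basis. uniform_Cm S P m (\<lambda>p. pder b (F p)))"

lemma uniform_Cm_imp_0: "uniform_Cm S P m F \<Longrightarrow> uniform_Cm S P 0 F"
  by (cases m) auto

lemma uniform_Cm_CmExt: "uniform_Cm S P m F \<Longrightarrow> p \<in> P \<Longrightarrow> CmExt S m (F p)"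
proof (induction m arbitrary: F)
  case (Suc m)
  have "CmExt S m (pder b (F p))" if "b \<in> Basis" for b
    using Suc.IH[of "\<lambda>p. pder b (F p)"] Suc.prems that by auto
  then show ?case using Suc.prems by auto
qed simp

lemma uniform_Cm_Suc_imp: "uniform_Cm S P (Suc m) F \<Longrightarrow> uniform_Cm S P m F"
proof (induction m arbitrary: F)
  case (Suc m)
  have "uniform_Cm S P m (\<lambda>p. pder b (F p))" if "b \<in> Basis" for b
    using Suc.IH[of "\<lambda>p. pder b (F p)"] Suc.prems that by simp
  then show ?case using Suc.prems by simp
qed simp

lemma uniform_Cm_mono: "uniform_Cm S P m F \<Longrightarrow> m' \<le> m \<Longrightarrow> uniform_Cm S P m' F"
  by (induction m) (auto simp: le_Suc_eq simp del: uniform_Cm.simps dest: uniform_Cm_Suc_imp)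

lemma uniform_Cm_cong:
  assumes "open S" "uniform_Cm S P m F" "\<forall>p\<in>P. \<forall>x\<in>S. F p x = G p x"
  shows "uniform_Cm S P m G"
  using assms(2,3)
proof (induction m arbitrary: F G)
  case 0
  then show ?case using CmExt_cong[OF assms(1)] by (metis uniform_Cm.simps(1))
next
  case (Suc m)
  have "uniform_Cm S P m (\<lambda>p. pder b (G p))" if "b \<in> Basis" for b
  proof (rule Suc.IH)
    show "uniform_Cm S P m (\<lambda>p. pder b (F p))" using Suc.prems(1) that by simp
    show "\<forall>p\<in>P. \<forall>x\<in>S. pder b (F p) x = pder b (G p) x"
      using pder_cong[OF assms(1)] Suc.prems(2) by blast
  qed
  moreover have "(\<lambda>t. G p (x + t *\<^sub>R b)) differentiable (at 0)" if "p \<in> P" "b \<in> Basis" "x \<in> S" for p b x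
    using line_differentiable_cong[OF assms(1) that(3), of "F p" "G p" b] Suc.prems that by simp
  moreover have "uniform_Cm S P 0 G"
    using Suc uniform_Cm_Suc_imp uniform_Cm_imp_0 by blast
  ultimately show ?case by simp
qed

lemma uniform_Cm_reindex:
  assumes "uniform_Cm S P m F" "\<pi> ` Q \<subseteq> P"
  shows "uniform_Cm S Q m (\<lambda>q. F (\<pi> q))"
  using assms(1)
proof (induction m arbitrary: F)
  case 0
  then obtain B where "\<forall>p\<in>P. \<forall>x\<in>S. \<bar>F p x\<bar> \<le> B" by auto
  then have "\<forall>q\<in>Q. \<forall>x\<in>S. \<bar>F (\<pi> q) x\<bar> \<le> B" using assms(2) by auto
  then show ?case using 0 assms(2) by auto
next
  case (Suc m)
  have "uniform_Cm S Q m (\<lambda>q. pder b (F (\<pi> q)))" if "b \<in> Basis" for b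
    using Suc.IH[of "\<lambda>p. pder b (F p)"] Suc.prems that by simp
  moreover have "uniform_Cm S Q 0 (\<lambda>q. F (\<pi> q))"
    using Suc.IH Suc.prems uniform_Cm_Suc_imp uniform_Cm_imp_0 by blast
  ultimately show ?case using Suc.prems assms(2) by auto
qed

lemma uniform_Cm_add:
  assumes "open S" "uniform_Cm S P m F" "uniform_Cm S P m G"
  shows "uniform_Cm S P m (\<lambda>p x. F p x + G p x)"
  using assms(2,3)
proof (induction m arbitrary: F G)
  case 0
  then obtain B1 B2 where "\<forall>p\<in>P. \<forall>x\<in>S. \<bar>F p x\<bar> \<le> B1" "\<forall>p\<in>P. \<forall>x\<in>S. \<bar>G p x\<bar> \<le> B2" by auto
  then have "\<forall>p\<in>P. \<forall>x\<in>S. \<bar>F p x + G p x\<bar> \<le> B1 + B2"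
    by (meson abs_triangle_ineq add_mono order_trans)
  moreover have "CmExt S 0 (\<lambda>x. F p x + G p x)" if p: "p \<in> P" for p
  proof -
    obtain f where f: "continuous_on (closure S) f" "\<forall>x\<in>S. f x = F p x" using 0 p by auto
    obtain g where g: "continuous_on (closure S) g" "\<forall>x\<in>S. g x = G p x" using 0 p by auto
    have "continuous_on (closure S) (\<lambda>x. f x + g x)" using f g by (intro continuous_intros)
    then show ?thesis using f g by auto
  qed
  ultimately show ?case by auto
next
  case (Suc m)
  have dF: "\<forall>p\<in>P. \<forall>b\<in>Basis. \<forall>x\<in>S. (\<lambda>t. F p (x + t *\<^sub>R b)) differentiable (at 0)"
    and dG: "\<forall>p\<in>P. \<forall>b\<in>Basis. \<forall>x\<in>S. (\<lambda>t. G p (x + t *\<^sub>R b)) differentiable (at 0)"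
    using Suc.prems by simp_all
  have "uniform_Cm S P m (\<lambda>p. pder b (\<lambda>x. F p x + G p x))" if b: "b \<in> Basis" for b
  proof (rule uniform_Cm_cong[OF assms(1)])
    show "uniform_Cm S P m (\<lambda>p x. pder b (F p) x + pder b (G p) x)"
      using Suc.IH[of "\<lambda>p. pder b (F p)" "\<lambda>p. pder b (G p)"] Suc.prems b by simp
    show "\<forall>p\<in>P. \<forall>x\<in>S. pder b (F p) x + pder b (G p) x = pder b (\<lambda>x. F p x + G p x) x"
    proof (intro ballI)
      fix p x assume "p \<in> P" "x \<in> S"
      then show "pder b (F p) x + pder b (G p) x = pder b (\<lambda>x. F p x + G p x) x"
        using pder_add[where F="F p" and G="G p" and x=x and b=b] dF dG b by simp
    qed
  qed
  moreover have "\<forall>p\<in>P. \<forall>b\<in>Basis. \<forall>x\<in>S.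
      (\<lambda>t. F p (x + t *\<^sub>R b) + G p (x + t *\<^sub>R b)) differentiable (at 0)"
    using line_differentiable_add dF dG by blast
  moreover have "uniform_Cm S P 0 (\<lambda>p x. F p x + G p x)"
    using Suc.IH Suc.prems uniform_Cm_Suc_imp uniform_Cm_imp_0 by blast
  ultimately show ?case by simp
qed

lemma uniform_Cm_mult:
  assumes "open S" "uniform_Cm S P m F" "uniform_Cm S P m G"
  shows "uniform_Cm S P m (\<lambda>p x. F p x * G p x)"
  using assms(2,3)
proof (induction m arbitrary: F G)
  case 0
  then obtain B1 B2 where "\<forall>p\<in>P. \<forall>x\<in>S. \<bar>F p x\<bar> \<le> B1" "\<forall>p\<in>P. \<forall>x\<in>S. \<bar>G p x\<bar> \<le> B2" by auto
  then have "\<forall>p\<in>P. \<forall>x\<in>S. \<bar>F p x * G p x\<bar> \<le> B1 * B2"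
    unfolding abs_mult by (meson abs_ge_zero mult_mono order_trans)
  moreover have "CmExt S 0 (\<lambda>x. F p x * G p x)" if p: "p \<in> P" for p
  proof -
    obtain f where f: "continuous_on (closure S) f" "\<forall>x\<in>S. f x = F p x" using 0 p by auto
    obtain g where g: "continuous_on (closure S) g" "\<forall>x\<in>S. g x = G p x" using 0 p by auto
    have "continuous_on (closure S) (\<lambda>x. f x * g x)" using f g by (intro continuous_intros)
    then show ?thesis using f g by auto
  qed
  ultimately show ?case by auto
next
  case (Suc m)
  have dF: "\<forall>p\<in>P. \<forall>b\<in>Basis. \<forall>x\<in>S. (\<lambda>t. F p (x + t *\<^sub>R b)) differentiable (at 0)"
    and dG: "\<forall>p\<in>P. \<forall>b\<in>Basis. \<forall>x\<in>S. (\<lambda>t. G p (x + t *\<^sub>R b)) differentiable (at 0)"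
    using Suc.prems by simp_all
  have "uniform_Cm S P m (\<lambda>p. pder b (\<lambda>x. F p x * G p x))" if b: "b \<in> Basis" for b
  proof (rule uniform_Cm_cong[OF assms(1)])
    have "uniform_Cm S P m (\<lambda>p x. pder b (F p) x * G p x)"
      using Suc.IH[of "\<lambda>p. pder b (F p)" G] Suc.prems(1) uniform_Cm_Suc_imp[OF Suc.prems(2)] b by simp
    moreover have "uniform_Cm S P m (\<lambda>p x. F p x * pder b (G p) x)"
      using Suc.IH[of F "\<lambda>p. pder b (G p)"] uniform_Cm_Suc_imp[OF Suc.prems(1)] Suc.prems(2) b by simp
    ultimately show "uniform_Cm S P m (\<lambda>p x. pder b (F p) x * G p x + F p x * pder b (G p) x)"
      by (rule uniform_Cm_add[OF assms(1)])
    show "\<forall>p\<in>P. \<forall>x\<in>S. pder b (F p) x * G p x + F p x * pder b (G p) x = pder b (\<lambda>x. F p x * G p x) x"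
    proof (intro ballI)
      fix p x assume "p \<in> P" "x \<in> S"
      then show "pder b (F p) x * G p x + F p x * pder b (G p) x = pder b (\<lambda>x. F p x * G p x) x"
        using pder_mult[where F="F p" and G="G p" and x=x and b=b] dF dG b by simp
    qed
  qed
  moreover have "\<forall>p\<in>P. \<forall>b\<in>Basis. \<forall>x\<in>S.
      (\<lambda>t. F p (x + t *\<^sub>R b) * G p (x + t *\<^sub>R b)) differentiable (at 0)"
    using line_differentiable_mult dF dG by blast
  moreover have "uniform_Cm S P 0 (\<lambda>p x. F p x * G p x)"
    using Suc.IH Suc.prems uniform_Cm_Suc_imp uniform_Cm_imp_0 by blast
  ultimately show ?case by simp
qed

lemma CmExt_0_bounded:
  assumes "bounded S" "CmExt S 0 v"
  shows "\<exists>B. \<forall>x\<in>S. \<bar>v x\<bar> \<le> B"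
proof -
  obtain g where g: "continuous_on (closure S) g" "\<forall>x\<in>S. g x = v x" using assms(2) by auto
  have "bounded (g ` closure S)"
    using assms(1) g(1) by (simp add: compact_continuous_image compact_imp_bounded)
  then obtain B where "\<forall>x\<in>closure S. \<bar>g x\<bar> \<le> B" by (auto simp: bounded_iff)
  then show ?thesis using g(2) closure_subset by fastforce
qed

lemma uniform_Cm_const:
  assumes "bounded S" "CmExt S m v"
  shows "uniform_Cm S P m (\<lambda>_. v)"
  using assms(2)
proof (induction m arbitrary: v)
  case 0
  then show ?case using CmExt_0_bounded[OF assms(1)] by auto
next
  case (Suc m)
  then show ?case using CmExt_0_bounded[OF assms(1), of v] by auto
qed

lemma uniform_Cm_fold_pder_bounded:
  assumes "uniform_Cm S P m F" "set bs \<subseteq> Basis" "length bs \<le> m"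
  shows "\<exists>B. \<forall>p\<in>P. \<forall>x\<in>S. \<bar>fold pder bs (F p) x\<bar> \<le> B"
  using assms
proof (induction bs arbitrary: m F)
  case Nil
  then show ?case using uniform_Cm_imp_0[OF Nil.prems(1)] by auto
next
  case (Cons b bs)
  then obtain m' where m: "m = Suc m'" by (cases m) auto
  then have "uniform_Cm S P m' (\<lambda>p. pder b (F p))" using Cons.prems by simp
  then show ?case using Cons.IH[of m' "\<lambda>p. pder b (F p)"] Cons.prems m by simp
qed

lemma uniform_Cm_dpart_bounded:
  assumes "uniform_Cm S P m F" "\<alpha> \<in> mindex m"
  shows "\<exists>B. \<forall>p\<in>P. \<forall>x\<in>S. \<bar>dpart \<alpha> (F p) x\<bar> \<le> B"
  unfolding dpart_eq_fold_pder_word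
  using uniform_Cm_fold_pder_bounded[OF assms(1) set_pder_word length_pder_word[OF assms(2)]] .

context
  fixes S :: "'a::euclidean_space set" and P :: "'p set" and m :: nat and F :: "'p \<Rightarrow> 'a \<Rightarrow> real"
  assumes nonempty: "S \<noteq> {}" and uniform: "uniform_Cm S P m F"
begin

lemma uniform_Cm_bdd_above_dpart:
  assumes "p \<in> P" "\<alpha> \<in> mindex m"
  shows "bdd_above ((\<lambda>x. \<bar>dpart \<alpha> (F p) x\<bar>) ` S)"
proof -
  obtain B where "\<forall>p\<in>P. \<forall>x\<in>S. \<bar>dpart \<alpha> (F p) x\<bar> \<le> B"
    using uniform_Cm_dpart_bounded[OF uniform assms(2)] by blast
  then show ?thesis using assms(1) by (intro bdd_aboveI2[where M = B]) auto
qed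

lemma uniform_Cm_SUP_dpart_nonneg:
  assumes "p \<in> P" "\<alpha> \<in> mindex m"
  shows "0 \<le> (SUP x\<in>S. \<bar>dpart \<alpha> (F p) x\<bar>)"
proof -
  obtain x where "x \<in> S" using nonempty by auto
  then show ?thesis
    using cSUP_upper2[OF uniform_Cm_bdd_above_dpart[OF assms]] by (meson abs_ge_zero)
qed

lemma uniform_Cm_cmnorm_nonneg: "p \<in> P \<Longrightarrow> 0 \<le> cmnorm S m (F p)"
  unfolding cmnorm_def using uniform_Cm_SUP_dpart_nonneg
  by (auto intro!: sum_nonneg divide_nonneg_pos prod_pos)

lemma uniform_Cm_cmnorm_mono:
  assumes "p \<in> P" "m' \<le> m"
  shows "cmnorm S m' (F p) \<le> cmnorm S m (F p)"
proof -
  have "mindex m' \<subseteq> (mindex m :: ('a \<Rightarrow> nat) set)" using assms(2) unfolding mindex_def by auto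
  then show ?thesis
    unfolding cmnorm_def using uniform_Cm_SUP_dpart_nonneg[OF assms(1)]
    by (intro sum_mono2[OF finite_mindex]) (auto intro!: divide_nonneg_pos prod_pos)
qed

lemma uniform_Cm_abs_le_cmnorm:
  assumes "p \<in> P" "x \<in> S"
  shows "\<bar>F p x\<bar> \<le> cmnorm S m (F p)"
proof -
  define z where "z = ((\<lambda>_. 0) :: 'a \<Rightarrow> nat)"
  have "\<bar>F p x\<bar> \<le> (SUP x\<in>S. \<bar>dpart z (F p) x\<bar>)"
    using uniform_Cm_bdd_above_dpart[OF assms(1) zero_in_mindex] assms(2)
    unfolding z_def dpart_zero by (rule cSUP_upper2) simp
  also have "\<dots> = 1 / real (\<Prod>b\<in>Basis. fact (z b) :: nat) * (SUP x\<in>S. \<bar>dpart z (F p) x\<bar>)"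
    by (simp add: z_def)
  also have "\<dots> \<le> cmnorm S m (F p)"
    unfolding cmnorm_def using uniform_Cm_SUP_dpart_nonneg[OF assms(1)] zero_in_mindex
    by (intro member_le_sum[OF _ _ finite_mindex]) (auto simp: z_def intro!: divide_nonneg_pos prod_pos)
  finally show ?thesis .
qed

lemma uniform_Cm_cmnorm_bounded: "bdd_above ((\<lambda>p. cmnorm S m (F p)) ` P)"
proof -
  have "\<forall>\<alpha>\<in>mindex m. \<exists>B. \<forall>p\<in>P. \<forall>x\<in>S. \<bar>dpart \<alpha> (F p) x\<bar> \<le> B"
    using uniform_Cm_dpart_bounded[OF uniform] by blast
  then obtain B where B: "\<forall>\<alpha>\<in>mindex m. \<forall>p\<in>P. \<forall>x\<in>S. \<bar>dpart \<alpha> (F p) x\<bar> \<le> B \<alpha>"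
    by metis
  have "cmnorm S m (F p) \<le> (\<Sum>\<alpha>\<in>mindex m. (1 / real (\<Prod>b\<in>Basis. fact (\<alpha> b) :: nat)) * B \<alpha>)"
    if p: "p \<in> P" for p
    unfolding cmnorm_def
  proof (rule sum_mono)
    fix \<alpha> :: "'a \<Rightarrow> nat" assume \<alpha>: "\<alpha> \<in> mindex m"
    have "(SUP x\<in>S. \<bar>dpart \<alpha> (F p) x\<bar>) \<le> B \<alpha>"
      using B \<alpha> p nonempty by (intro cSUP_least) auto
    then show "1 / real (\<Prod>b\<in>Basis. fact (\<alpha> b) :: nat) * (SUP x\<in>S. \<bar>dpart \<alpha> (F p) x\<bar>)
        \<le> 1 / real (\<Prod>b\<in>Basis. fact (\<alpha> b) :: nat) * B \<alpha>"
      by (intro mult_left_mono) (simp_all add: prod_nonneg)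
  qed
  then show ?thesis by (rule bdd_aboveI2)
qed

lemma uniform_Cm_cmnorm_le_SUP: "p \<in> P \<Longrightarrow> cmnorm S m (F p) \<le> (SUP p\<in>P. cmnorm S m (F p))"
  by (rule cSUP_upper[OF _ uniform_Cm_cmnorm_bounded])

lemma uniform_Cm_abs_le_SUP_cmnorm:
  "p \<in> P \<Longrightarrow> x \<in> S \<Longrightarrow> \<bar>F p x\<bar> \<le> (SUP p\<in>P. cmnorm S m (F p))"
  using uniform_Cm_abs_le_cmnorm uniform_Cm_cmnorm_le_SUP by (meson order_trans)

end


section \<open>Sections of a smooth kernel\<close>

lemma has_real_derivative_uniform_limit:
  fixes f f' :: "nat \<Rightarrow> real \<Rightarrow> real"
  assumes T: "convex T" "open T" "t0 \<in> T"
    and der: "\<And>n t. t \<in> T \<Longrightarrow> (f n has_real_derivative f' n t) (at t)"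
    and unif: "\<And>e. e > 0 \<Longrightarrow> \<forall>\<^sub>F n in sequentially. \<forall>t\<in>T. \<bar>f' n t - g' t\<bar> \<le> e"
    and lim: "\<And>t. t \<in> T \<Longrightarrow> (\<lambda>n. f n t) \<longlonglongrightarrow> g t"
  shows "(g has_real_derivative g' t0) (at t0)"
proof -
  have der': "(f n has_derivative (\<lambda>h. f' n t * h)) (at t within T)" if "t \<in> T" for n t
    using der[OF that] by (simp add: has_field_derivative_def has_derivative_at_withinI)
  have unif': "\<forall>\<^sub>F n in sequentially. \<forall>t\<in>T. \<forall>h. norm (f' n t * h - g' t * h) \<le> e * norm h"
    if "e > 0" for e
    using unif[OF that] by (rule eventually_mono)
      (auto simp: left_diff_distrib[symmetric] abs_mult intro: mult_right_mono)
  obtain g'' where g'': "\<forall>t\<in>T. (\<lambda>n. f n t) \<longlonglongrightarrow> g'' t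
      \<and> (g'' has_derivative (\<lambda>h. g' t * h)) (at t within T)"
    using has_derivative_sequence[OF T(1) der' unif' T(3) lim[OF T(3)]] by blast
  have eq: "g'' t = g t" if "t \<in> T" for t
    using g'' lim that LIMSEQ_unique by blast
  have "(g'' has_derivative (\<lambda>h. g' t0 * h)) (at t0)"
    using g'' T at_within_open[OF T(3,2)] by metis
  then have "(g has_derivative (\<lambda>h. g' t0 * h)) (at t0)"
    using has_derivative_transform_within_open T(2,3) eq by blast
  then show ?thesis by (simp add: has_field_derivative_def)
qed

lemma sections_tendsto_uniformly:
  fixes g :: "'a::metric_space \<times> 'b::metric_space \<Rightarrow> real"
  assumes "compact (A \<times> B)" "continuous_on (A \<times> B) g" "\<forall>n. q n \<in> A" "q \<longlonglongrightarrow> p" "p \<in> A" "e > 0"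
  shows "\<forall>\<^sub>F n in sequentially. \<forall>y\<in>B. \<bar>g (q n, y) - g (p, y)\<bar> \<le> e"
proof -
  obtain d where d: "d > 0" "\<forall>a\<in>A \<times> B. \<forall>a'\<in>A \<times> B. dist a' a < d \<longrightarrow> dist (g a') (g a) < e"
    using compact_uniformly_continuous[OF assms(2,1)] assms(6) unfolding uniformly_continuous_on_def
      by blast
  have "\<forall>\<^sub>F n in sequentially. dist (q n) p < d" using assms(4) d(1) by (rule tendstoD)
  then show ?thesis
  proof (rule eventually_mono, intro ballI)
    fix n y assume "dist (q n) p < d" "y \<in> B"
    then show "\<bar>g (q n, y) - g (p, y)\<bar> \<le> e"
      using d(2) assms(3,5) by (fastforce simp: dist_Pair_Pair dist_real_def)
  qed
qed

text \<open>Sections through boundary points are limits of sections through interior points whose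
  derivatives converge uniformly, by uniform continuity of the extended derivative gb on the compact
  closure.\<close>

lemma extended_section_has_real_derivative:
  fixes G g gb :: "'a::euclidean_space \<times> 'a \<Rightarrow> real"
  assumes S: "open S" "bounded S" and p: "p \<in> closure S" and y: "y \<in> S" and b: "b \<in> Basis"
    and dG: "\<forall>z\<in>S \<times> S. (\<lambda>t. G (z + t *\<^sub>R (0, b))) differentiable (at 0)"
    and g: "continuous_on (closure S \<times> closure S) g" "\<forall>z\<in>S \<times> S. g z = G z"
    and gb: "continuous_on (closure S \<times> closure S) gb" "\<forall>z\<in>S \<times> S. gb z = pder (0, b) G z"
  shows "((\<lambda>t. g (p, y + t *\<^sub>R b)) has_real_derivative gb (p, y)) (at 0)"
proof -
  obtain r where r: "r > 0" "ball y r \<subseteq> S" using S(1) y openE by blast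
  define T where "T = ball (0::real) r"
  have yT: "y + t *\<^sub>R b \<in> S" if "t \<in> T" for t
  proof -
    have "dist y (y + t *\<^sub>R b) = \<bar>t\<bar>" using b by (simp add: dist_norm)
    then show ?thesis using that r unfolding T_def by auto
  qed
  obtain q where q: "\<forall>n. q n \<in> S" "q \<longlonglongrightarrow> p" using p closure_sequential by blast
  have der: "((\<lambda>t. G (q n, y + t *\<^sub>R b)) has_real_derivative gb (q n, y + t *\<^sub>R b)) (at t)"
    if t: "t \<in> T" for n t
  proof -
    define z where "z = (q n, y + t *\<^sub>R b)"
    have z: "z \<in> S \<times> S" unfolding z_def using q(1) yT[OF t] by auto
    have "((\<lambda>s. G (z + s *\<^sub>R (0, b))) has_real_derivative pder (0, b) G z) (at 0)"
      using dG z by (intro line_has_real_derivative_pder) blast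
    moreover have "(\<lambda>s. G (z + s *\<^sub>R (0, b))) = (\<lambda>s. G (q n, y + (s + t) *\<^sub>R b))"
      unfolding z_def by (auto simp: algebra_simps)
    moreover have "gb z = pder (0, b) G z" using gb(2) z by blast
    ultimately have "((\<lambda>s. G (q n, y + (s + t) *\<^sub>R b)) has_real_derivative gb z) (at 0)"
      by simp
    then have "((\<lambda>t. G (q n, y + t *\<^sub>R b)) has_real_derivative gb z) (at (0 + t))"
      by (simp only: DERIV_shift)
    then show ?thesis unfolding z_def by simp
  qed
  have unif: "\<forall>\<^sub>F n in sequentially. \<forall>t\<in>T. \<bar>gb (q n, y + t *\<^sub>R b) - gb (p, y + t *\<^sub>R b)\<bar> \<le> e"
    if "e > 0" for e
  proof -
    have "compact (closure S \<times> closure S)" using S(2) by (simp add: compact_Times compact_closure)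
    moreover have "\<forall>n. q n \<in> closure S" using q(1) closure_subset by blast
    ultimately have "\<forall>\<^sub>F n in sequentially. \<forall>z\<in>closure S. \<bar>gb (q n, z) - gb (p, z)\<bar> \<le> e"
      by (rule sections_tendsto_uniformly[OF _ gb(1) _ q(2) p that])
    then show ?thesis by (rule eventually_mono) (use yT closure_subset in blast)
  qed
  have lim: "(\<lambda>n. G (q n, y + t *\<^sub>R b)) \<longlonglongrightarrow> g (p, y + t *\<^sub>R b)" if t: "t \<in> T" for t
  proof -
    have "(\<lambda>n. g (q n, y + t *\<^sub>R b)) \<longlonglongrightarrow> g (p, y + t *\<^sub>R b)"
      using q yT[OF t] p closure_subset
      by (intro continuous_on_tendsto_compose[OF g(1)] tendsto_intros) (auto intro!: always_eventually)
    then show ?thesis using g(2) q(1) yT[OF t] by simp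
  qed
  have "convex T" "open T" "0 \<in> T" using r unfolding T_def by auto
  from has_real_derivative_uniform_limit[OF this der unif lim] show ?thesis by simp
qed

lemma uniform_Cm_0_sections:
  fixes g :: "'a::euclidean_space \<times> 'a \<Rightarrow> real"
  assumes "bounded S" "continuous_on (closure S \<times> closure S) g"
  shows "uniform_Cm S (closure S) 0 (\<lambda>p y. g (p, y))"
proof -
  have "bounded (g ` (closure S \<times> closure S))"
    using assms by (simp add: compact_Times compact_closure compact_continuous_image compact_imp_bounded)
  then obtain B where "\<forall>z\<in>closure S \<times> closure S. \<bar>g z\<bar> \<le> B" by (auto simp: bounded_iff)
  then have "\<forall>p\<in>closure S. \<forall>x\<in>S. \<bar>g (p, x)\<bar> \<le> B" using closure_subset by blast
  moreover have "continuous_on (closure S) (\<lambda>y. g (p, y))" if "p \<in> closure S" for p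
    by (rule continuous_on_compose2[OF assms(2)]) (use that in \<open>auto intro!: continuous_intros\<close>)
  ultimately show ?thesis by auto
qed

lemma uniform_Cm_sections:
  fixes G g :: "'a::euclidean_space \<times> 'a \<Rightarrow> real"
  assumes S: "open S" "bounded S"
  shows "CmExt (S \<times> S) m G \<Longrightarrow> continuous_on (closure S \<times> closure S) g \<Longrightarrow> \<forall>z\<in>S \<times> S. g z = G z
     \<Longrightarrow> uniform_Cm S (closure S) m (\<lambda>p y. g (p, y))"
proof (induction m arbitrary: G g)
  case 0
  then show ?case using uniform_Cm_0_sections[OF S(2)] by blast
next
  case (Suc m)
  have "uniform_Cm S (closure S) m (\<lambda>p. pder b (\<lambda>y. g (p, y)))
      \<and> (\<forall>p\<in>closure S. \<forall>x\<in>S. (\<lambda>t. g (p, x + t *\<^sub>R b)) differentiable (at 0))" if b: "b \<in> Basis" for b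
  proof -
    have b2: "(0, b) \<in> (Basis :: ('a \<times> 'a) set)" using b unfolding Basis_prod_def by auto
    have Gb: "CmExt (S \<times> S) m (pder (0, b) G)" using Suc.prems(1) b2 by simp
    then obtain gb where gb: "continuous_on (closure S \<times> closure S) gb" "\<forall>z\<in>S \<times> S. gb z = pder (0, b) G z"
      by (cases m) (auto simp: closure_Times)
    have D: "((\<lambda>t. g (p, y + t *\<^sub>R b)) has_real_derivative gb (p, y)) (at 0)"
      if "p \<in> closure S" "y \<in> S" for p y
      using Suc.prems b2 by (intro extended_section_has_real_derivative[OF S that b _ _ _ gb]) auto
    have "\<forall>p\<in>closure S. \<forall>y\<in>S. gb (p, y) = pder b (\<lambda>y. g (p, y)) y"
      unfolding pder_def using D DERIV_imp_deriv by metis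
    then have "uniform_Cm S (closure S) m (\<lambda>p. pder b (\<lambda>y. g (p, y)))"
      by (rule uniform_Cm_cong[OF S(1) Suc.IH[OF Gb gb]])
    moreover have "\<forall>p\<in>closure S. \<forall>x\<in>S. (\<lambda>t. g (p, x + t *\<^sub>R b)) differentiable (at 0)"
      using D real_differentiable_def by blast
    ultimately show ?thesis by blast
  qed
  then show ?case using uniform_Cm_0_sections[OF S(2) Suc.prems(2)] by simp
qed

lemma CmExt_0_swap:
  fixes G :: "'a::euclidean_space \<times> 'a \<Rightarrow> real"
  assumes "CmExt (S \<times> S) 0 G"
  shows "CmExt (S \<times> S) 0 (\<lambda>z. G (prod.swap z))"
proof -
  obtain g where g: "continuous_on (closure (S \<times> S)) g" "\<forall>z\<in>S \<times> S. g z = G z" using assms by auto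
  have "continuous_on (closure (S \<times> S)) (\<lambda>z. g (prod.swap z))"
    by (rule continuous_on_compose2[OF g(1)]) (auto intro!: continuous_intros simp: closure_Times)
  then show ?thesis using g(2) by auto
qed

lemma CmExt_swap:
  fixes G :: "'a::euclidean_space \<times> 'a \<Rightarrow> real"
  shows "CmExt (S \<times> S) m G \<Longrightarrow> CmExt (S \<times> S) m (\<lambda>z. G (prod.swap z))"
proof (induction m arbitrary: G)
  case 0
  then show ?case by (rule CmExt_0_swap)
next
  case (Suc m)
  have swap: "prod.swap d \<in> (Basis :: ('a \<times> 'a) set)" if "d \<in> Basis" for d :: "'a \<times> 'a"
    using that unfolding Basis_prod_def by auto
  have pder_swap: "pder d (\<lambda>z. G (prod.swap z)) = (\<lambda>z. pder (prod.swap d) G (prod.swap z))" for d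
    unfolding pder_def by (auto simp: fun_eq_iff prod.swap_def algebra_simps)
  have "CmExt (S \<times> S) m (pder d (\<lambda>z. G (prod.swap z)))" if "d \<in> Basis" for d
    unfolding pder_swap using Suc.IH[of "pder (prod.swap d) G"] Suc.prems swap[OF that] by simp
  moreover have "(\<lambda>t. G (prod.swap (z + t *\<^sub>R d))) differentiable (at 0)"
    if "d \<in> Basis" "z \<in> S \<times> S" for d z
  proof -
    have "(\<lambda>t. G (prod.swap z + t *\<^sub>R prod.swap d)) differentiable (at 0)"
      using Suc.prems swap[OF that(1)] that(2) by auto
    then show ?thesis by (simp add: prod.swap_def)
  qed
  moreover have "CmExt (S \<times> S) 0 (\<lambda>z. G (prod.swap z))"
    using Suc.prems by (intro CmExt_0_swap) simp
  ultimately show ?case by simp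
qed


section \<open>The discrete Nystroem operator\<close>

lemma integrable_on_open_bounded:
  fixes g :: "'a::euclidean_space \<Rightarrow> real"
  assumes "open S" "bounded S" "continuous_on (closure S) g"
  shows "g integrable_on S"
proof -
  have "bounded (g ` closure S)"
    using assms(2,3) by (simp add: compact_continuous_image compact_imp_bounded)
  then obtain B where B: "\<forall>x\<in>closure S. norm (g x) \<le> B" unfolding bounded_iff by blast
  have S: "S \<in> lmeasurable" using lmeasurable_open[OF assms(2,1)] .
  have "g \<in> borel_measurable (lebesgue_on S)"
    using S continuous_on_subset[OF assms(3) closure_subset]
    by (intro continuous_imp_measurable_on_sets_lebesgue) (auto simp: fmeasurable_def)
  then show ?thesis
    using S B closure_subset integrable_on_const[OF S, of B]
    by (intro measurable_bounded_by_integrable_imp_integrable[of g S "\<lambda>_. B"]) (auto simp: fmeasurable_def)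
qed

lemma abs_sum_mult_le:
  fixes a e :: "nat \<Rightarrow> real"
  assumes "\<forall>l<N. \<bar>e l\<bar> \<le> E"
  shows "\<bar>\<Sum>l<N. a l * e l\<bar> \<le> (\<Sum>l<N. \<bar>a l\<bar>) * E"
proof -
  have "\<bar>\<Sum>l<N. a l * e l\<bar> \<le> (\<Sum>l<N. \<bar>a l\<bar> * E)"
    using assms by (intro order_trans[OF sum_abs sum_mono]) (auto simp: abs_mult intro: mult_left_mono)
  then show ?thesis by (simp add: sum_distrib_right)
qed

lemma abs_weighted_sum_le:
  fixes ws e :: "nat \<Rightarrow> real"
  assumes "(\<Sum>i<N. \<bar>ws i\<bar>) \<le> CQ" "\<forall>i<N. \<bar>e i\<bar> \<le> E" "0 \<le> E"
  shows "\<bar>\<Sum>i<N. ws i * e i\<bar> \<le> CQ * E"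
  using abs_sum_mult_le[OF assms(2), of ws] mult_right_mono[OF assms(1,3)] by linarith

definition nystrom_op :: "('a \<times> 'a \<Rightarrow> real) \<Rightarrow> (nat \<Rightarrow> real) \<Rightarrow> (nat \<Rightarrow> 'a) \<Rightarrow> nat
    \<Rightarrow> (nat \<Rightarrow> nat \<Rightarrow> real) \<Rightarrow> nat \<Rightarrow> (nat \<Rightarrow> real) \<Rightarrow> 'a \<Rightarrow> real" where
  "nystrom_op k ws ys N Rm n c x = (\<Sum>i<N. ws i * k (x, ys i) * (\<Sum>j<n. Rm i j * c j))"

lemma continuous_on_nystrom_op:
  assumes "continuous_on (T \<times> T) k" "\<forall>i<N. ys i \<in> T"
  shows "continuous_on T (nystrom_op k ws ys N Rm n c)"
proof -
  have "continuous_on T (\<lambda>x. k (x, ys i))" if "i < N" for i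
    by (rule continuous_on_compose2[OF assms(1)]) (use assms(2) that in \<open>auto intro!: continuous_intros\<close>)
  then show ?thesis unfolding nystrom_op_def by (intro continuous_intros) auto
qed

lemma nystrom_op_diff:
  "nystrom_op k ws ys N Rm n (\<lambda>j. c j - d j) x
    = nystrom_op k ws ys N Rm n c x - nystrom_op k ws ys N Rm n d x"
  unfolding nystrom_op_def by (simp add: right_diff_distrib sum_subtractf)

lemma nystrom_eq_nystrom_op:
  "nystrom lam k f ys N n ws Rm uh x = (nystrom_op k ws ys N Rm n uh x + f x) / lam"
  unfolding nystrom_def nystrom_op_def by simp

lemma sysmat_mult:
  assumes "j < n"
  shows "(\<Sum>l<n. sysmat lam k xs ys N ws Rm j l * c l) = lam * c j - nystrom_op k ws ys N Rm n c (xs j)"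
proof -
  have "(\<Sum>l<n. sysmat lam k xs ys N ws Rm j l * c l)
      = (\<Sum>l<n. (if j = l then lam else 0) * c l) - (\<Sum>l<n. (\<Sum>i<N. k (xs j, ys i) * ws i * Rm i l) * c l)"
    unfolding sysmat_def by (simp add: left_diff_distrib sum_subtractf)
  also have "(\<Sum>l<n. (if j = l then lam else 0) * c l) = (\<Sum>l<n. if j = l then lam * c l else 0)"
    by (intro sum.cong) auto
  also have "\<dots> = lam * c j" using assms by simp
  also have "(\<Sum>l<n. (\<Sum>i<N. k (xs j, ys i) * ws i * Rm i l) * c l)
      = (\<Sum>l<n. \<Sum>i<N. ws i * k (xs j, ys i) * (Rm i l * c l))"
    by (simp add: sum_distrib_right sum_distrib_left mult_ac)
  also have "\<dots> = nystrom_op k ws ys N Rm n c (xs j)"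
    unfolding nystrom_op_def by (subst sum.swap) (simp add: sum_distrib_left)
  finally show ?thesis .
qed

lemma nystrom_op_linear:
  "nystrom_op k ws ys N Rm n (\<lambda>j. \<Sum>l\<in>L. a l * c l j) x = (\<Sum>l\<in>L. a l * nystrom_op k ws ys N Rm n (c l) x)"
proof -
  have "nystrom_op k ws ys N Rm n (\<lambda>j. \<Sum>l\<in>L. a l * c l j) x
      = (\<Sum>i<N. \<Sum>l\<in>L. \<Sum>j<n. a l * (ws i * k (x, ys i) * (Rm i j * c l j)))"
    unfolding nystrom_op_def
    by (simp add: sum_distrib_left mult_ac) (subst sum.swap, simp)
  also have "\<dots> = (\<Sum>l\<in>L. a l * nystrom_op k ws ys N Rm n (c l) x)"
    unfolding nystrom_op_def by (subst sum.swap) (simp add: sum_distrib_left)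
  finally show ?thesis .
qed

locale nystrom_discretisation =
  fixes S :: "'a::euclidean_space set" and k :: "'a \<times> 'a \<Rightarrow> real" and lam :: real
    and xs ys :: "nat \<Rightarrow> 'a" and n N :: nat and ws :: "nat \<Rightarrow> real" and Rm :: "nat \<Rightarrow> nat \<Rightarrow> real"
    and K0 CQ CI :: real
  assumes open_S: "open S" and bounded_S: "bounded S" and S_nonempty: "S \<noteq> {}"
    and k_cont: "continuous_on (closure S \<times> closure S) k"
    and k_bound: "\<forall>a\<in>closure S. \<forall>b\<in>closure S. \<bar>k (a, b)\<bar> \<le> K0"
    and xs_closure: "\<forall>j<n. xs j \<in> closure S" and ys_closure: "\<forall>i<N. ys i \<in> closure S"
    and weights_bound: "(\<Sum>i<N. \<bar>ws i\<bar>) \<le> CQ" and Rm_bound: "\<forall>i<N. (\<Sum>j<n. \<bar>Rm i j\<bar>) \<le> CI"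
    and CI_nonneg: "0 \<le> CI"
begin

abbreviation Kh :: "(nat \<Rightarrow> real) \<Rightarrow> 'a \<Rightarrow> real" where
  "Kh \<equiv> nystrom_op k ws ys N Rm n"

abbreviation A :: "nat \<Rightarrow> nat \<Rightarrow> real" where
  "A \<equiv> sysmat lam k xs ys N ws Rm"

lemma K0_nonneg: "0 \<le> K0"
  using k_bound S_nonempty closure_subset by (meson abs_ge_zero all_not_in_conv order_trans subsetD)

lemma CQ_nonneg: "0 \<le> CQ"
  using weights_bound by (meson order_trans sum_nonneg abs_ge_zero)

lemma abs_reconstruction_le:
  assumes "0 \<le> D" "\<forall>j<n. \<bar>c j\<bar> \<le> D" "i < N"
  shows "\<bar>\<Sum>j<n. Rm i j * c j\<bar> \<le> CI * D"
  using abs_sum_mult_le[OF assms(2), of "Rm i"] mult_right_mono[OF _ assms(1)] Rm_bound assms(3)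
  by (meson order_trans)

lemma abs_Kh_le:
  assumes "0 \<le> D" "\<forall>j<n. \<bar>c j\<bar> \<le> D" "x \<in> closure S"
  shows "\<bar>Kh c x\<bar> \<le> CQ * (K0 * (CI * D))"
proof -
  have "\<bar>k (x, ys i) * (\<Sum>j<n. Rm i j * c j)\<bar> \<le> K0 * (CI * D)" if "i < N" for i
    unfolding abs_mult
    using k_bound assms(3) ys_closure that K0_nonneg abs_reconstruction_le[OF assms(1,2) that]
    by (intro mult_mono) auto
  then have "\<bar>\<Sum>i<N. ws i * (k (x, ys i) * (\<Sum>j<n. Rm i j * c j))\<bar> \<le> CQ * (K0 * (CI * D))"
    using K0_nonneg CI_nonneg assms(1) by (intro abs_weighted_sum_le[OF weights_bound]) auto
  then show ?thesis unfolding nystrom_op_def by (simp add: mult.assoc)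
qed

lemma continuous_on_Kh: "continuous_on (closure S) (Kh c)"
  using continuous_on_nystrom_op[OF k_cont ys_closure] .

lemma sysmat_inf_norm_le: "mat_inf_norm n n A \<le> \<bar>lam\<bar> + CQ * (K0 * CI)"
proof (rule mat_inf_norm_le)
  fix j assume j: "j < n"
  have "\<bar>A j l\<bar> \<le> \<bar>if j = l then lam else 0\<bar> + (\<Sum>i<N. \<bar>ws i\<bar> * (K0 * \<bar>Rm i l\<bar>))" for l
  proof -
    have "\<bar>k (xs j, ys i) * ws i * Rm i l\<bar> \<le> \<bar>ws i\<bar> * (K0 * \<bar>Rm i l\<bar>)" if "i < N" for i
    proof -
      have "\<bar>k (xs j, ys i)\<bar> \<le> K0" using k_bound xs_closure ys_closure j that by blast
      then have "\<bar>k (xs j, ys i)\<bar> * (\<bar>ws i\<bar> * \<bar>Rm i l\<bar>) \<le> K0 * (\<bar>ws i\<bar> * \<bar>Rm i l\<bar>)"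
        by (intro mult_right_mono) auto
      then show ?thesis by (simp add: abs_mult mult_ac)
    qed
    then have "\<bar>\<Sum>i<N. k (xs j, ys i) * ws i * Rm i l\<bar> \<le> (\<Sum>i<N. \<bar>ws i\<bar> * (K0 * \<bar>Rm i l\<bar>))"
      by (intro order_trans[OF sum_abs sum_mono]) auto
    then show ?thesis unfolding sysmat_def by linarith
  qed
  then have "(\<Sum>l<n. \<bar>A j l\<bar>) \<le> (\<Sum>l<n. \<bar>if j = l then lam else 0\<bar>) + (\<Sum>l<n. \<Sum>i<N. \<bar>ws i\<bar> * (K0 * \<bar>Rm i l\<bar>))"
    by (simp add: sum_mono flip: sum.distrib)
  also have "(\<Sum>l<n. \<Sum>i<N. \<bar>ws i\<bar> * (K0 * \<bar>Rm i l\<bar>)) = (\<Sum>i<N. \<bar>ws i\<bar> * (K0 * (\<Sum>l<n. \<bar>Rm i l\<bar>)))"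
    by (subst sum.swap) (simp add: sum_distrib_left)
  also have "(\<Sum>l<n. \<bar>if j = l then lam else 0\<bar>) = \<bar>lam\<bar>"
    using j by (simp add: if_distrib[of abs] cong: if_cong)
  also have "(\<Sum>i<N. \<bar>ws i\<bar> * (K0 * (\<Sum>l<n. \<bar>Rm i l\<bar>))) \<le> (\<Sum>i<N. \<bar>ws i\<bar>) * (K0 * CI)"
    unfolding sum_distrib_right using Rm_bound K0_nonneg by (intro sum_mono mult_left_mono) auto
  also have "\<dots> \<le> CQ * (K0 * CI)"
    using weights_bound K0_nonneg CI_nonneg by (intro mult_right_mono) auto
  finally show "(\<Sum>l<n. \<bar>A j l\<bar>) \<le> \<bar>lam\<bar> + CQ * (K0 * CI)" by simp
next
  show "0 \<le> \<bar>lam\<bar> + CQ * (K0 * CI)" using CQ_nonneg K0_nonneg CI_nonneg by simp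
qed

lemma Kh_Kh_consistency:
  assumes D: "0 \<le> D" "\<forall>j<n. \<bar>d j\<bar> \<le> D" and x: "x \<in> closure S" and eps: "0 \<le> eps"
    and consistent: "\<forall>l<N. \<bar>Kh (\<lambda>j. k (xs j, ys l)) x - integral S (\<lambda>y. k (x, y) * k (y, ys l))\<bar> \<le> eps"
  shows "\<bar>Kh (\<lambda>j. Kh d (xs j)) x - integral S (\<lambda>y. k (x, y) * Kh d y)\<bar> \<le> CQ * CI * eps * D"
proof -
  \<comment> \<open>Kh d is a combination of the sections k(-, y_l); expand both terms in them\<close>
  define a where "a l = ws l * (\<Sum>j<n. Rm l j * d j)" for l
  have Kh_d: "Kh d y = (\<Sum>l<N. a l * k (y, ys l))" for y
    unfolding nystrom_op_def a_def by (simp add: mult_ac)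
  have "(\<lambda>y. k (x, y) * k (y, ys l)) integrable_on S" if "l < N" for l
    using x ys_closure that
    by (intro integrable_on_open_bounded open_S bounded_S continuous_on_mult
        continuous_on_compose2[OF k_cont]) (auto intro!: continuous_intros)
  then have "integral S (\<lambda>y. k (x, y) * Kh d y) = (\<Sum>l<N. a l * integral S (\<lambda>y. k (x, y) * k (y, ys l)))"
    unfolding Kh_d sum_distrib_left
      by (subst integral_sum) (auto simp: mult.left_commute intro: integrable_on_mult_right)
  moreover have "Kh (\<lambda>j. Kh d (xs j)) x = (\<Sum>l<N. a l * Kh (\<lambda>j. k (xs j, ys l)) x)"
    unfolding Kh_d by (rule nystrom_op_linear)
  ultimately have "\<bar>Kh (\<lambda>j. Kh d (xs j)) x - integral S (\<lambda>y. k (x, y) * Kh d y)\<bar>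
      = \<bar>\<Sum>l<N. a l * (Kh (\<lambda>j. k (xs j, ys l)) x - integral S (\<lambda>y. k (x, y) * k (y, ys l)))\<bar>"
    by (simp add: right_diff_distrib sum_subtractf)
  also have "\<dots> \<le> (\<Sum>l<N. \<bar>a l\<bar>) * eps"
    using consistent by (rule abs_sum_mult_le)
  also have "(\<Sum>l<N. \<bar>a l\<bar>) \<le> CQ * (CI * D)"
  proof -
    have "\<bar>a l\<bar> \<le> \<bar>ws l\<bar> * (CI * D)" if "l < N" for l
      unfolding a_def abs_mult using abs_reconstruction_le[OF D that] by (intro mult_left_mono) auto
    then have "(\<Sum>l<N. \<bar>a l\<bar>) \<le> (\<Sum>l<N. \<bar>ws l\<bar>) * (CI * D)"
      unfolding sum_distrib_right by (intro sum_mono) auto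
    also have "\<dots> \<le> CQ * (CI * D)" using weights_bound CI_nonneg D(1) by (intro mult_right_mono) auto
    finally show ?thesis .
  qed
  finally show ?thesis using eps by (simp add: mult_right_mono mult_ac)
qed

end

lemma nystrom_op_scale:
  "nystrom_op k ws ys N Rm n (\<lambda>j. a * c j) x = a * nystrom_op k ws ys N Rm n c x"
  unfolding nystrom_op_def by (simp add: sum_distrib_left mult.left_commute)

definition nystrom_stability_const :: "real \<Rightarrow> real \<Rightarrow> real \<Rightarrow> real \<Rightarrow> real \<Rightarrow> real" where
  "nystrom_stability_const lam K0 CQ CI Mr = 2 * (1 + Mr * (CQ * (K0 * CI))) / \<bar>lam\<bar>"

locale stable_nystrom_discretisation = nystrom_discretisation +
  fixes Mr eps :: real
  assumes lam_nonzero: "lam \<noteq> 0" and Mr_nonneg: "0 \<le> Mr"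
    and resolvent_bound: "\<And>v B. continuous_on (closure S) v \<Longrightarrow> \<forall>x\<in>closure S. \<bar>intop S k lam v x\<bar> \<le> B
        \<Longrightarrow> \<forall>x\<in>closure S. \<bar>v x\<bar> \<le> Mr * B"
    and consistent: "\<forall>x\<in>closure S. \<forall>l<N.
        \<bar>Kh (\<lambda>j. k (xs j, ys l)) x - integral S (\<lambda>y. k (x, y) * k (y, ys l))\<bar> \<le> eps"
    and eps_nonneg: "0 \<le> eps"
    and eps_small: "Mr * (CQ * CI * eps) \<le> \<bar>lam\<bar> / 2"
begin

abbreviation stability_const :: real where
  "stability_const \<equiv> nystrom_stability_const lam K0 CQ CI Mr"

lemma stability_const_nonneg: "0 \<le> stability_const"
  unfolding nystrom_stability_const_def using Mr_nonneg CQ_nonneg K0_nonneg CI_nonneg by simp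

lemma intop_Kh:
  "intop S k lam (Kh c) x
    = Kh (\<lambda>j. lam * c j - Kh c (xs j)) x + (Kh (\<lambda>j. Kh c (xs j)) x - integral S (\<lambda>y. k (x, y) * Kh c y))"
  unfolding intop_def nystrom_op_diff nystrom_op_scale by simp

lemma abs_intop_Kh_le:
  assumes T: "0 \<le> T" "\<forall>j<n. \<bar>lam * c j - Kh c (xs j)\<bar> \<le> T"
    and D: "0 \<le> D" "\<forall>j<n. \<bar>c j\<bar> \<le> D" and x: "x \<in> closure S"
  shows "\<bar>intop S k lam (Kh c) x\<bar> \<le> CQ * (K0 * (CI * T)) + CQ * CI * eps * D"
proof -
  have "\<bar>Kh (\<lambda>j. lam * c j - Kh c (xs j)) x\<bar> \<le> CQ * (K0 * (CI * T))"
    using T by (intro abs_Kh_le x) auto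
  moreover have "\<bar>Kh (\<lambda>j. Kh c (xs j)) x - integral S (\<lambda>y. k (x, y) * Kh c y)\<bar> \<le> CQ * CI * eps * D"
    using consistent x by (intro Kh_Kh_consistency D eps_nonneg) auto
  ultimately show ?thesis unfolding intop_Kh by linarith
qed

text \<open>Kh c is controlled by the resolvent bound of the continuous operator, and its values at the
  nodes control c back, up to a multiple of max |c| that the smallness of eps absorbs.\<close>

lemma Kh_stable:
  assumes T: "0 \<le> T" "\<forall>j<n. \<bar>lam * c j - Kh c (xs j)\<bar> \<le> T"
  shows "\<forall>j<n. \<bar>c j\<bar> \<le> stability_const * T"
proof -
  define cmax where "cmax = Max (insert 0 ((\<lambda>j. \<bar>c j\<bar>) ` {..<n}))"
  have cmax: "0 \<le> cmax" "\<forall>j<n. \<bar>c j\<bar> \<le> cmax" "cmax = 0 \<or> (\<exists>j<n. cmax = \<bar>c j\<bar>)"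
    unfolding cmax_def using Max_in[of "insert 0 ((\<lambda>j. \<bar>c j\<bar>) ` {..<n})"] by auto
  define P where "P = Mr * (CQ * (K0 * CI))"
  have "\<forall>x\<in>closure S. \<bar>Kh c x\<bar> \<le> Mr * (CQ * (K0 * (CI * T)) + CQ * CI * eps * cmax)"
    by (rule resolvent_bound[OF continuous_on_Kh]) (use abs_intop_Kh_le[OF T cmax(1,2)] in blast)
  then have Kh_c: "\<forall>x\<in>closure S. \<bar>Kh c x\<bar> \<le> P * T + Mr * (CQ * CI * eps) * cmax"
    unfolding P_def by (simp add: algebra_simps)
  have c: "\<bar>lam\<bar> * \<bar>c j\<bar> \<le> (1 + P) * T + \<bar>lam\<bar> / 2 * cmax" if "j < n" for j
  proof -
    have "\<bar>lam\<bar> * \<bar>c j\<bar> \<le> \<bar>lam * c j - Kh c (xs j)\<bar> + \<bar>Kh c (xs j)\<bar>"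
      by (simp add: abs_mult[symmetric] abs_triangle_ineq4 order_trans[OF _ abs_triangle_ineq])
    also have "\<dots> \<le> T + (P * T + Mr * (CQ * CI * eps) * cmax)"
      using T Kh_c xs_closure that by (intro add_mono) auto
    also have "\<dots> \<le> (1 + P) * T + \<bar>lam\<bar> / 2 * cmax"
      using eps_small cmax(1) mult_right_mono by (fastforce simp: algebra_simps)
    finally show ?thesis .
  qed
  have "cmax \<le> stability_const * T"
  proof (cases "cmax = 0")
    case True
    then show ?thesis using stability_const_nonneg T(1) by simp
  next
    case False
    then obtain j where "j < n" "cmax = \<bar>c j\<bar>" using cmax(3) by auto
    then have "\<bar>lam\<bar> * cmax \<le> 2 * ((1 + P) * T)" using c by fastforce
    then show ?thesis using lam_nonzero unfolding nystrom_stability_const_def P_def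
      by (simp add: field_simps)
  qed
  then show ?thesis using cmax(2) by fastforce
qed

lemma sysmat_stable: "0 \<le> T \<Longrightarrow> \<forall>i<n. \<bar>\<Sum>j<n. A i j * c j\<bar> \<le> T \<Longrightarrow> \<forall>j<n. \<bar>c j\<bar> \<le> stability_const * T"
  using Kh_stable by (simp add: sysmat_mult)

lemma sysmat_solvable: "\<exists>x. \<forall>i<n. (\<Sum>j<n. A i j * x j) = b i"
  using stable_imp_solvable[OF stability_const_nonneg sysmat_stable] .

lemma sysmat_solution_unique:
  "\<forall>i<n. (\<Sum>j<n. A i j * x j) = b i \<Longrightarrow> \<forall>i<n. (\<Sum>j<n. A i j * x' j) = b i \<Longrightarrow> \<forall>j<n. x j = x' j"
  using stable_imp_solution_unique[OF stability_const_nonneg sysmat_stable] .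

lemma sysmat_cond_inf_le: "cond_inf n A \<le> (\<bar>lam\<bar> + CQ * (K0 * CI)) * stability_const"
proof -
  have "cond_inf n A \<le> mat_inf_norm n n A * stability_const"
    by (rule stable_imp_cond_inf_le[OF stability_const_nonneg]) (rule sysmat_stable)
  then show ?thesis
    using mult_right_mono[OF sysmat_inf_norm_le stability_const_nonneg] by linarith
qed

lemma nystrom_error_le:
  assumes solves: "\<forall>i<n. (\<Sum>j<n. A i j * uh j) = f (xs i)"
    and residual: "\<forall>y\<in>closure S. \<bar>lam * u y - f y - Kh (\<lambda>j. u (xs j)) y\<bar> \<le> E"
    and x: "x \<in> closure S"
  shows "\<bar>u x - nystrom lam k f ys N n ws Rm uh x\<bar> \<le> (1 + CQ * (K0 * CI) * stability_const) / \<bar>lam\<bar> * E"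
proof -
  have E: "0 \<le> E" using residual x by (meson abs_ge_zero order_trans)
  define e where "e j = u (xs j) - uh j" for j
  have "lam * e j - Kh e (xs j) = lam * u (xs j) - f (xs j) - Kh (\<lambda>j. u (xs j)) (xs j)"
    if j: "j < n" for j
  proof -
    have "f (xs j) = lam * uh j - Kh uh (xs j)" using solves sysmat_mult[OF j] j by metis
    then show ?thesis unfolding e_def nystrom_op_diff by (simp add: algebra_simps)
  qed
  then have "\<forall>j<n. \<bar>e j\<bar> \<le> stability_const * E"
    using residual xs_closure by (intro Kh_stable E) auto
  then have Kh_e: "\<bar>Kh e x\<bar> \<le> CQ * (K0 * (CI * (stability_const * E)))"
    using stability_const_nonneg E by (intro abs_Kh_le x) auto
  have "lam * (u x - nystrom lam k f ys N n ws Rm uh x) = (lam * u x - f x - Kh (\<lambda>j. u (xs j)) x) + Kh e x"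
    using lam_nonzero unfolding nystrom_eq_nystrom_op e_def nystrom_op_diff by (simp add: field_simps)
  then have "\<bar>lam\<bar> * \<bar>u x - nystrom lam k f ys N n ws Rm uh x\<bar>
      \<le> E + CQ * (K0 * (CI * (stability_const * E)))"
    using residual x Kh_e
      by (simp add: abs_mult[symmetric]) (meson abs_triangle_ineq add_mono order_trans)
  then show ?thesis using lam_nonzero by (simp add: field_simps)
qed

end

section \<open>Error estimates for the Nystroem method\<close>

lemma notin_spectrum_resolvent_bound:
  assumes "notin_spectrum S k lam" "bounded S"
  obtains Mr where "0 \<le> Mr"
    and "\<And>v B. continuous_on (closure S) v \<Longrightarrow> \<forall>x\<in>closure S. \<bar>intop S k lam v x\<bar> \<le> B
        \<Longrightarrow> \<forall>x\<in>closure S. \<bar>v x\<bar> \<le> Mr * B"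
proof -
  obtain M where M: "\<And>v. continuous_on (closure S) v \<Longrightarrow>
      sup_norm (closure S) v \<le> M * sup_norm (closure S) (intop S k lam v)"
    using assms(1) unfolding notin_spectrum_def by blast
  have "\<bar>v x\<bar> \<le> \<bar>M\<bar> * B"
    if v: "continuous_on (closure S) v" and B: "\<forall>x\<in>closure S. \<bar>intop S k lam v x\<bar> \<le> B"
      and x: "x \<in> closure S" for v B x
  proof -
    have "bounded (v ` closure S)"
      using assms(2) v by (simp add: compact_continuous_image compact_imp_bounded)
    then have "bdd_above ((\<lambda>x. \<bar>v x\<bar>) ` closure S)" by (auto simp: bounded_iff intro: bdd_aboveI2)
    then have "\<bar>v x\<bar> \<le> sup_norm (closure S) v" unfolding sup_norm_def using x by (rule cSUP_upper2) simp
    also have "\<dots> \<le> M * sup_norm (closure S) (intop S k lam v)" using M v .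
    also have "\<dots> \<le> \<bar>M\<bar> * B"
    proof -
      have "bdd_above ((\<lambda>x. \<bar>intop S k lam v x\<bar>) ` closure S)" using B by (intro bdd_aboveI2) auto
      then have "0 \<le> sup_norm (closure S) (intop S k lam v)"
        unfolding sup_norm_def using x by (rule cSUP_upper2) simp
      moreover have "sup_norm (closure S) (intop S k lam v) \<le> B"
        unfolding sup_norm_def using B x by (intro cSUP_least) auto
      ultimately show ?thesis by (meson abs_ge_self abs_ge_zero mult_mono order_trans)
    qed
    finally show ?thesis .
  qed
  then show ?thesis using that[of "\<bar>M\<bar>"] by auto
qed

lemma integral_minus_nystrom_op_le:
  assumes quad: "\<bar>integral S (\<lambda>y. k (x, y) * g y) - (\<Sum>i<N. ws i * (k (x, ys i) * g (ys i)))\<bar> \<le> Eq"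
    and recon: "\<forall>i<N. \<bar>g (ys i) - (\<Sum>j<n. Rm i j * g (xs j))\<bar> \<le> Er"
    and k_bound: "\<forall>i<N. \<bar>k (x, ys i)\<bar> \<le> K0" and weights: "(\<Sum>i<N. \<bar>ws i\<bar>) \<le> CQ"
    and nonneg: "0 \<le> K0" "0 \<le> Er"
  shows "\<bar>integral S (\<lambda>y. k (x, y) * g y) - nystrom_op k ws ys N Rm n (\<lambda>j. g (xs j)) x\<bar>
    \<le> Eq + CQ * (K0 * Er)"
proof -
  have "\<bar>\<Sum>i<N. ws i * (k (x, ys i) * (g (ys i) - (\<Sum>j<n. Rm i j * g (xs j))))\<bar> \<le> CQ * (K0 * Er)"
    using k_bound recon nonneg
    by (intro abs_weighted_sum_le[OF weights]) (auto simp: abs_mult intro!: mult_mono)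
  moreover have "integral S (\<lambda>y. k (x, y) * g y) - nystrom_op k ws ys N Rm n (\<lambda>j. g (xs j)) x
      = (integral S (\<lambda>y. k (x, y) * g y) - (\<Sum>i<N. ws i * (k (x, ys i) * g (ys i))))
        + (\<Sum>i<N. ws i * (k (x, ys i) * (g (ys i) - (\<Sum>j<n. Rm i j * g (xs j)))))"
    unfolding nystrom_op_def by (simp add: algebra_simps sum_subtractf)
  ultimately show ?thesis using quad by linarith
qed

locale nystrom_problem =
  fixes \<Omega> :: "'a::euclidean_space set" and k :: "'a \<times> 'a \<Rightarrow> real" and lam :: real
    and f u :: "'a \<Rightarrow> real" and q qw qR :: nat
    and Y :: "real \<Rightarrow> nat \<Rightarrow> 'a" and nY :: "real \<Rightarrow> nat" and w :: "real \<Rightarrow> nat \<Rightarrow> real"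
    and X :: "real \<Rightarrow> nat \<Rightarrow> 'a" and nX :: "real \<Rightarrow> nat"
    and R :: "real \<Rightarrow> real \<Rightarrow> nat \<Rightarrow> nat \<Rightarrow> real"
    and CQ Cw CR CI Mr :: real
  assumes bounded: "bounded \<Omega>" and "open": "open \<Omega>" and lam_nonzero: "lam \<noteq> 0"
    and k_Cm: "Cm (\<Omega> \<times> \<Omega>) q k" and f_cont: "continuous_on (closure \<Omega>) f"
    and f_nonzero: "\<exists>x\<in>closure \<Omega>. f x \<noteq> 0"
    and u_Cm: "Cm \<Omega> q u" and equation: "\<forall>x\<in>\<Omega>. lam * u x - integral \<Omega> (\<lambda>y. k (x, y) * u y) = f x"
    and Mr_nonneg: "0 \<le> Mr"
    and resolvent_bound: "\<And>v B. continuous_on (closure \<Omega>) v \<Longrightarrow> \<forall>x\<in>closure \<Omega>. \<bar>intop \<Omega> k lam v x\<bar> \<le> B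
        \<Longrightarrow> \<forall>x\<in>closure \<Omega>. \<bar>v x\<bar> \<le> Mr * B"
    and Y_closure: "\<forall>hY>0. \<forall>i<nY hY. Y hY i \<in> closure \<Omega>"
    and nY_tendsto: "filterlim nY at_top (at_right 0)"
    and weights_bound: "\<forall>hY>0. (\<Sum>i<nY hY. \<bar>w hY i\<bar>) \<le> CQ"
    and qw: "0 < qw" "qw \<le> q"
    and quadrature: "\<forall>hY>0. \<forall>v. Cm \<Omega> qw v \<longrightarrow>
        \<bar>integral \<Omega> v - (\<Sum>i<nY hY. w hY i * v (Y hY i))\<bar> \<le> Cw * hY ^ qw * cmnorm \<Omega> qw v"
    and X_closure: "\<forall>hX>0. \<forall>j<nX hX. X hX j \<in> closure \<Omega>"
    and R_bound: "\<forall>hX>0. \<forall>hY>0. \<forall>i<nY hY. (\<Sum>j<nX hX. \<bar>R hX hY i j\<bar>) \<le> CI" and CI_nonneg: "0 \<le> CI"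
    and qR: "0 < qR" "qR \<le> q"
    and reconstruction: "\<forall>hX>0. \<forall>hY>0. \<forall>v. Cm \<Omega> qR v \<longrightarrow> (\<forall>i<nY hY.
        \<bar>v (Y hY i) - (\<Sum>j<nX hX. R hX hY i j * v (X hX j))\<bar> \<le> CR * hX ^ qR * cmnorm \<Omega> qR v)"
begin

abbreviation K0 :: real where "K0 \<equiv> cmnorm (\<Omega> \<times> \<Omega>) 0 k"
abbreviation k_norm :: real where "k_norm \<equiv> SUP x\<in>closure \<Omega>. cmnorm \<Omega> q (\<lambda>y. k (x, y))"
abbreviation u_norm :: real where "u_norm \<equiv> cmnorm \<Omega> q u"

abbreviation Kh :: "real \<Rightarrow> real \<Rightarrow> (nat \<Rightarrow> real) \<Rightarrow> 'a \<Rightarrow> real" where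
  "Kh hX hY \<equiv> nystrom_op k (w hY) (Y hY) (nY hY) (R hX hY) (nX hX)"

lemma k_cont: "continuous_on (closure \<Omega> \<times> closure \<Omega>) k"
  using k_Cm unfolding Cm_def by (simp add: closure_Times)

lemma u_cont: "continuous_on (closure \<Omega>) u"
  using u_Cm unfolding Cm_def by simp

lemma k_bound: "\<forall>a\<in>closure \<Omega>. \<forall>b\<in>closure \<Omega>. \<bar>k (a, b)\<bar> \<le> K0"
  using abs_le_cmnorm_0[of "\<Omega> \<times> \<Omega>" k] bounded k_cont by (simp add: closure_Times bounded_Times)

lemma continuous_on_rows: "x \<in> closure \<Omega> \<Longrightarrow> continuous_on (closure \<Omega>) (\<lambda>y. k (x, y))"
  by (rule continuous_on_compose2[OF k_cont]) (auto intro!: continuous_intros)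

lemma continuous_on_columns: "z \<in> closure \<Omega> \<Longrightarrow> continuous_on (closure \<Omega>) (\<lambda>y. k (y, z))"
  by (rule continuous_on_compose2[OF k_cont]) (auto intro!: continuous_intros)

lemma uniform_rows: "uniform_Cm \<Omega> (closure \<Omega>) q (\<lambda>x y. k (x, y))"
  using uniform_Cm_sections[OF "open" bounded] k_Cm k_cont unfolding Cm_def by blast

lemma uniform_columns: "uniform_Cm \<Omega> (closure \<Omega>) q (\<lambda>z y. k (y, z))"
proof -
  have "continuous_on (closure \<Omega> \<times> closure \<Omega>) (\<lambda>z. k (prod.swap z))"
    by (rule continuous_on_compose2[OF k_cont]) (auto intro!: continuous_intros)
  then show ?thesis
    using uniform_Cm_sections[OF "open" bounded CmExt_swap] k_Cm unfolding Cm_def by fastforce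
qed

lemma uniform_u: "uniform_Cm \<Omega> P q (\<lambda>_. u)"
  using uniform_Cm_const[OF bounded] u_Cm unfolding Cm_def by blast

lemma Omega_nonempty: "\<Omega> \<noteq> {}"
  using f_nonzero by auto

lemma u_nonzero: "\<exists>x\<in>\<Omega>. u x \<noteq> 0"
proof (rule ccontr)
  assume u0: "\<not> (\<exists>x\<in>\<Omega>. u x \<noteq> 0)"
  then have "integral \<Omega> (\<lambda>y. k (x, y) * u y) = integral \<Omega> (\<lambda>y. 0)" for x
    by (intro integral_cong) auto
  then have "\<forall>x\<in>\<Omega>. \<bar>f x\<bar> \<le> 0" using equation u0 by auto
  then have "\<forall>x\<in>closure \<Omega>. \<bar>f x\<bar> \<le> 0"
    using continuous_le_on_closure[OF continuous_on_rabs[OF f_cont]] by blast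
  then show False using f_nonzero by auto
qed

lemma cmnorm_u_pos:
  assumes "m \<le> q"
  shows "0 < cmnorm \<Omega> m u"
proof -
  obtain x0 where x0: "x0 \<in> \<Omega>" "u x0 \<noteq> 0" using u_nonzero by blast
  have "uniform_Cm \<Omega> {()} m (\<lambda>_. u)" using uniform_Cm_mono[OF uniform_u assms] .
  then have "\<bar>u x0\<bar> \<le> cmnorm \<Omega> m u"
    by (rule uniform_Cm_abs_le_cmnorm[OF Omega_nonempty _ singletonI x0(1)])
  then show ?thesis using x0(2) by linarith
qed

lemma cmnorm_u_le: "m \<le> q \<Longrightarrow> cmnorm \<Omega> m u \<le> u_norm"
  by (rule uniform_Cm_cmnorm_mono[OF Omega_nonempty uniform_u singletonI])

lemma Cm_u: "m \<le> q \<Longrightarrow> Cm \<Omega> m u"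
  using uniform_Cm_CmExt[OF uniform_Cm_mono[OF uniform_u] singletonI] u_cont unfolding Cm_def by blast

lemma CQ_nonneg: "0 \<le> CQ"
proof -
  have "(\<Sum>i<nY 1. \<bar>w 1 i\<bar>) \<le> CQ" using weights_bound by simp
  then show ?thesis by (meson order_trans sum_nonneg abs_ge_zero)
qed

lemma Cw_nonneg: "0 \<le> Cw"
proof -
  have "\<bar>integral \<Omega> u - (\<Sum>i<nY 1. w 1 i * u (Y 1 i))\<bar> \<le> Cw * cmnorm \<Omega> qw u"
    using quadrature[rule_format, of 1 u] Cm_u[OF qw(2)] by simp
  then have "0 \<le> Cw * cmnorm \<Omega> qw u" by (meson abs_ge_zero order_trans)
  then show ?thesis using cmnorm_u_pos[OF qw(2)] by (simp add: zero_le_mult_iff)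
qed

lemma CR_nonneg: "0 \<le> CR"
proof -
  have "\<forall>\<^sub>F h in at_right 0. 1 \<le> nY h" using nY_tendsto unfolding filterlim_at_top by blast
  then obtain b :: real where b: "0 < b" "\<forall>h>0. h < b \<longrightarrow> 1 \<le> nY h"
    unfolding eventually_at_right_field by blast
  have hY: "0 < b / 2" "0 < nY (b / 2)"
    using b(1) b(2)[rule_format, of "b / 2"] by auto
  have "\<bar>u (Y (b / 2) 0) - (\<Sum>j<nX 1. R 1 (b / 2) 0 j * u (X 1 j))\<bar> \<le> CR * cmnorm \<Omega> qR u"
    using reconstruction[rule_format, of 1 "b / 2" u 0] Cm_u[OF qR(2)] hY by simp
  then have "0 \<le> CR * cmnorm \<Omega> qR u" by (meson abs_ge_zero order_trans)
  then show ?thesis using cmnorm_u_pos[OF qR(2)] by (simp add: zero_le_mult_iff)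
qed

end
context nystrom_problem
begin

definition B_columns :: real where
  "B_columns = (SUP z\<in>closure \<Omega>. cmnorm \<Omega> qR (\<lambda>y. k (y, z)))"

definition B_products :: real where
  "B_products = (SUP xz\<in>closure \<Omega> \<times> closure \<Omega>. cmnorm \<Omega> qw (\<lambda>y. k (fst xz, y) * k (y, snd xz)))"

definition B_rows_u :: real where
  "B_rows_u = (SUP x\<in>closure \<Omega>. cmnorm \<Omega> qw (\<lambda>y. k (x, y) * u y))"

lemma uniform_columns_qR: "uniform_Cm \<Omega> (closure \<Omega>) qR (\<lambda>z y. k (y, z))"
  using uniform_columns qR(2) by (rule uniform_Cm_mono)

lemma uniform_products:
  "uniform_Cm \<Omega> (closure \<Omega> \<times> closure \<Omega>) qw (\<lambda>xz y. k (fst xz, y) * k (y, snd xz))"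
proof -
  have "fst ` (closure \<Omega> \<times> closure \<Omega>) \<subseteq> closure \<Omega>" "snd ` (closure \<Omega> \<times> closure \<Omega>) \<subseteq> closure \<Omega>"
    by auto
  from uniform_Cm_reindex[OF uniform_rows this(1)] uniform_Cm_reindex[OF uniform_columns this(2)]
  show ?thesis using qw(2) by (intro uniform_Cm_mono[OF uniform_Cm_mult[OF "open"]])
qed

lemma uniform_rows_u: "uniform_Cm \<Omega> (closure \<Omega>) qw (\<lambda>x y. k (x, y) * u y)"
  using uniform_Cm_mult[OF "open" uniform_rows uniform_u] qw(2) by (rule uniform_Cm_mono)

lemma Cm_columns: "z \<in> closure \<Omega> \<Longrightarrow> Cm \<Omega> qR (\<lambda>y. k (y, z))"
  unfolding Cm_def using uniform_Cm_CmExt[OF uniform_columns_qR] continuous_on_columns by blast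

lemma Cm_products: "x \<in> closure \<Omega> \<Longrightarrow> z \<in> closure \<Omega> \<Longrightarrow> Cm \<Omega> qw (\<lambda>y. k (x, y) * k (y, z))"
  unfolding Cm_def using uniform_Cm_CmExt[OF uniform_products, of "(x, z)"]
  by (auto intro!: continuous_intros continuous_on_rows continuous_on_columns)

lemma Cm_rows_u: "x \<in> closure \<Omega> \<Longrightarrow> Cm \<Omega> qw (\<lambda>y. k (x, y) * u y)"
  unfolding Cm_def using uniform_Cm_CmExt[OF uniform_rows_u] continuous_on_rows u_cont
  by (auto intro!: continuous_intros)

lemma cmnorm_columns_le: "z \<in> closure \<Omega> \<Longrightarrow> cmnorm \<Omega> qR (\<lambda>y. k (y, z)) \<le> B_columns"
  unfolding B_columns_def by (rule uniform_Cm_cmnorm_le_SUP[OF Omega_nonempty uniform_columns_qR])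

lemma cmnorm_products_le:
  "x \<in> closure \<Omega> \<Longrightarrow> z \<in> closure \<Omega> \<Longrightarrow> cmnorm \<Omega> qw (\<lambda>y. k (x, y) * k (y, z)) \<le> B_products"
  unfolding B_products_def
  using uniform_Cm_cmnorm_le_SUP[OF Omega_nonempty uniform_products, of "(x, z)"] by simp

lemma cmnorm_rows_u_le: "x \<in> closure \<Omega> \<Longrightarrow> cmnorm \<Omega> qw (\<lambda>y. k (x, y) * u y) \<le> B_rows_u"
  unfolding B_rows_u_def by (rule uniform_Cm_cmnorm_le_SUP[OF Omega_nonempty uniform_rows_u])

lemma closure_nonempty: "\<exists>x. x \<in> closure \<Omega>"
  using Omega_nonempty closure_subset by blast

lemma B_columns_nonneg: "0 \<le> B_columns"
  using closure_nonempty cmnorm_columns_le uniform_Cm_cmnorm_nonneg[OF Omega_nonempty uniform_columns_qR]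
  by (meson order_trans)

lemma B_products_nonneg: "0 \<le> B_products"
proof -
  obtain x where x: "x \<in> closure \<Omega>" using closure_nonempty by blast
  have "0 \<le> cmnorm \<Omega> qw (\<lambda>y. k (fst (x, x), y) * k (y, snd (x, x)))"
    using x by (intro uniform_Cm_cmnorm_nonneg[OF Omega_nonempty uniform_products]) simp
  then show ?thesis using cmnorm_products_le[OF x x] by simp
qed

lemma abs_k_le_k_norm: "x \<in> closure \<Omega> \<Longrightarrow> y \<in> \<Omega> \<Longrightarrow> \<bar>k (x, y)\<bar> \<le> k_norm"
  by (rule uniform_Cm_abs_le_SUP_cmnorm[OF Omega_nonempty uniform_rows])

lemma k_norm_nonneg: "0 \<le> k_norm"
  using abs_k_le_k_norm Omega_nonempty closure_subset
    by (meson abs_ge_zero ex_in_conv order_trans subsetD)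

lemma K0_nonneg: "0 \<le> K0"
  using k_bound closure_nonempty by (meson abs_ge_zero order_trans)

end

context nystrom_problem
begin

lemma u_norm_pos: "0 < u_norm"
  by (rule cmnorm_u_pos) simp

text \<open>The constant of the theorem may depend on k and u, so the norm of k(x, -) u is compared with
  k_norm * u_norm through a ratio rather than a Leibniz estimate.\<close>

definition prod_const :: real where
  "prod_const = (if k_norm > 0 then B_rows_u / (k_norm * u_norm) else 0)"

lemma prod_const_nonneg: "0 \<le> prod_const"
proof -
  obtain x where x: "x \<in> closure \<Omega>" using closure_nonempty by blast
  have "0 \<le> B_rows_u"
    using uniform_Cm_cmnorm_nonneg[OF Omega_nonempty uniform_rows_u x] cmnorm_rows_u_le[OF x]
      by linarith
  then show ?thesis unfolding prod_const_def using u_norm_pos by simp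
qed

lemma cmnorm_rows_u_le_prod_const:
  assumes x: "x \<in> closure \<Omega>"
  shows "cmnorm \<Omega> qw (\<lambda>y. k (x, y) * u y) \<le> prod_const * k_norm * u_norm"
proof (cases "k_norm > 0")
  case True
  then show ?thesis using cmnorm_rows_u_le[OF x] u_norm_pos unfolding prod_const_def by simp
next
  case False
  then have "k_norm = 0" using k_norm_nonneg by simp
  then have "\<forall>y\<in>\<Omega>. k (x, y) * u y = 0" using abs_k_le_k_norm[OF x] by fastforce
  then show ?thesis using cmnorm_vanishing[OF "open" Omega_nonempty] \<open>k_norm = 0\<close> by simp
qed

definition eps :: "real \<Rightarrow> real \<Rightarrow> real" where
  "eps hX hY = CQ * (K0 * (CR * hX ^ qR * B_columns)) + Cw * hY ^ qw * B_products"

lemma kernel_consistency: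
  assumes h: "0 < hX" "0 < hY" and x: "x \<in> closure \<Omega>" and l: "l < nY hY"
  shows "\<bar>Kh hX hY (\<lambda>j. k (X hX j, Y hY l)) x
      - integral \<Omega> (\<lambda>y. k (x, y) * k (y, Y hY l))\<bar> \<le> eps hX hY"
proof -
  define z where "z = Y hY l"
  have z: "z \<in> closure \<Omega>" using Y_closure h l unfolding z_def by blast
  have "\<bar>integral \<Omega> (\<lambda>y. k (x, y) * k (y, z)) - (\<Sum>i<nY hY. w hY i * (k (x, Y hY i) * k (Y hY i, z)))\<bar>
      \<le> Cw * hY ^ qw * cmnorm \<Omega> qw (\<lambda>y. k (x, y) * k (y, z))"
    using quadrature[rule_format, OF h(2) Cm_products[OF x z]] by simp
  also have "\<dots> \<le> Cw * hY ^ qw * B_products"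
    using cmnorm_products_le[OF x z] Cw_nonneg h by (intro mult_left_mono) auto
  finally have quad: "\<bar>integral \<Omega> (\<lambda>y. k (x, y) * k (y, z))
      - (\<Sum>i<nY hY. w hY i * (k (x, Y hY i) * k (Y hY i, z)))\<bar>
      \<le> Cw * hY ^ qw * B_products" .
  have "\<bar>k (Y hY i, z) - (\<Sum>j<nX hX. R hX hY i j * k (X hX j, z))\<bar> \<le> CR * hX ^ qR * B_columns"
    if "i < nY hY" for i
    using reconstruction h Cm_columns[OF z] that cmnorm_columns_le[OF z] CR_nonneg
    by (meson mult_left_mono order_trans zero_le_mult_iff zero_le_power less_imp_le)
  then have "\<bar>integral \<Omega> (\<lambda>y. k (x, y) * k (y, z)) - Kh hX hY (\<lambda>j. k (X hX j, z)) x\<bar>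
      \<le> Cw * hY ^ qw * B_products + CQ * (K0 * (CR * hX ^ qR * B_columns))"
    using k_bound x Y_closure weights_bound h K0_nonneg CR_nonneg B_columns_nonneg
    by (intro integral_minus_nystrom_op_le[OF quad]) auto
  then show ?thesis unfolding eps_def z_def by (simp add: abs_minus_commute)
qed

end

context nystrom_problem
begin

lemma residual_le:
  assumes h: "0 < hX" "0 < hY"
  shows "\<forall>y\<in>closure \<Omega>. \<bar>lam * u y - f y - Kh hX hY (\<lambda>j. u (X hX j)) y\<bar>
      \<le> Cw * hY ^ qw * (prod_const * k_norm * u_norm) + CQ * (K0 * (CR * hX ^ qR * u_norm))"
proof -
  have "\<bar>lam * u y - f y - Kh hX hY (\<lambda>j. u (X hX j)) y\<bar>
      \<le> Cw * hY ^ qw * (prod_const * k_norm * u_norm) + CQ * (K0 * (CR * hX ^ qR * u_norm))"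
    if y: "y \<in> \<Omega>" for y
  proof -
    have yc: "y \<in> closure \<Omega>" using y closure_subset by blast
    have "\<bar>integral \<Omega> (\<lambda>t. k (y, t) * u t) - (\<Sum>i<nY hY. w hY i * (k (y, Y hY i) * u (Y hY i)))\<bar>
        \<le> Cw * hY ^ qw * cmnorm \<Omega> qw (\<lambda>t. k (y, t) * u t)"
      using quadrature[rule_format, OF h(2) Cm_rows_u[OF yc]] by simp
    also have "\<dots> \<le> Cw * hY ^ qw * (prod_const * k_norm * u_norm)"
      using cmnorm_rows_u_le_prod_const[OF yc] Cw_nonneg h by (intro mult_left_mono) auto
    finally have quad: "\<bar>integral \<Omega> (\<lambda>t. k (y, t) * u t)
        - (\<Sum>i<nY hY. w hY i * (k (y, Y hY i) * u (Y hY i)))\<bar>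
        \<le> Cw * hY ^ qw * (prod_const * k_norm * u_norm)" .
    have "\<bar>u (Y hY i) - (\<Sum>j<nX hX. R hX hY i j * u (X hX j))\<bar> \<le> CR * hX ^ qR * u_norm"
      if "i < nY hY" for i
      using reconstruction h Cm_u[OF qR(2)] that cmnorm_u_le[OF qR(2)] CR_nonneg
      by (meson mult_left_mono order_trans zero_le_mult_iff zero_le_power less_imp_le)
    then have "\<bar>integral \<Omega> (\<lambda>t. k (y, t) * u t) - Kh hX hY (\<lambda>j. u (X hX j)) y\<bar>
        \<le> Cw * hY ^ qw * (prod_const * k_norm * u_norm) + CQ * (K0 * (CR * hX ^ qR * u_norm))"
      using k_bound yc Y_closure weights_bound h K0_nonneg CR_nonneg u_norm_pos
      by (intro integral_minus_nystrom_op_le[OF quad]) auto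
    moreover have "lam * u y - integral \<Omega> (\<lambda>t. k (y, t) * u t) = f y" using equation y by blast
    ultimately show ?thesis by (simp add: algebra_simps)
  qed
  moreover have "continuous_on (closure \<Omega>)
      (\<lambda>y. \<bar>lam * u y - f y - Kh hX hY (\<lambda>j. u (X hX j)) y\<bar>)"
    using continuous_on_nystrom_op[OF k_cont] Y_closure h u_cont f_cont
      by (intro continuous_intros) auto
  ultimately show ?thesis using continuous_le_on_closure by blast
qed

lemma residual_bound_le:
  assumes "0 \<le> hX" "0 \<le> hY"
  shows "Cw * hY ^ qw * (prod_const * k_norm * u_norm) + CQ * (K0 * (CR * hX ^ qR * u_norm))
      \<le> (prod_const + 1) * (Cw * k_norm * hY ^ qw + CQ * CR * K0 * hX ^ qR) * u_norm"
proof -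
  define a where "a = Cw * k_norm * hY ^ qw * u_norm"
  define b where "b = CQ * CR * K0 * hX ^ qR * u_norm"
  have "0 \<le> a" "0 \<le> b"
    unfolding a_def b_def using Cw_nonneg k_norm_nonneg CQ_nonneg CR_nonneg K0_nonneg u_norm_pos assms
      by simp_all
  then have "prod_const * a + b \<le> (prod_const + 1) * (a + b)" using prod_const_nonneg
    by (simp add: algebra_simps)
  then show ?thesis unfolding a_def b_def by (simp add: algebra_simps)
qed

definition delta :: real where
  "delta = min 1 (\<bar>lam\<bar> / (2 * (Mr * (CQ * CI * (CQ * K0 * CR * B_columns + Cw * B_products)) + 1)))"

lemma delta_pos: "0 < delta"
proof -
  have "0 \<le> Mr * (CQ * CI * (CQ * K0 * CR * B_columns + Cw * B_products))"
    using Mr_nonneg CQ_nonneg CI_nonneg K0_nonneg CR_nonneg Cw_nonneg B_columns_nonneg B_products_nonneg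
    by simp
  then show ?thesis unfolding delta_def using lam_nonzero by simp
qed

lemma eps_small:
  assumes h: "0 < hX" "hX < delta" "0 < hY" "hY < delta"
  shows "Mr * (CQ * CI * eps hX hY) \<le> \<bar>lam\<bar> / 2"
proof -
  define L where "L = CQ * K0 * CR * B_columns + Cw * B_products"
  have L: "0 \<le> L" "0 \<le> Mr * (CQ * CI * L)"
    unfolding L_def using Mr_nonneg CQ_nonneg CI_nonneg K0_nonneg CR_nonneg Cw_nonneg
      B_columns_nonneg B_products_nonneg by simp_all
  have "delta \<le> 1" unfolding delta_def by simp
  then have "hX ^ qR \<le> hX ^ 1" "hY ^ qw \<le> hY ^ 1"
    using h qR(1) qw(1) by (intro power_decreasing; simp)+
  then have "hX ^ qR \<le> delta" "hY ^ qw \<le> delta" using h by simp_all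
  then have "CQ * (K0 * (CR * hX ^ qR * B_columns)) \<le> CQ * (K0 * (CR * delta * B_columns))"
    and "Cw * hY ^ qw * B_products \<le> Cw * delta * B_products"
    using CQ_nonneg K0_nonneg CR_nonneg Cw_nonneg B_columns_nonneg B_products_nonneg
    by (intro mult_left_mono mult_right_mono; simp)+
  then have "eps hX hY \<le> L * delta" unfolding eps_def L_def by (simp add: algebra_simps)
  then have "Mr * (CQ * CI * eps hX hY) \<le> Mr * (CQ * CI * L) * delta"
    using Mr_nonneg CQ_nonneg CI_nonneg by (simp add: mult_left_mono mult.assoc)
  also have "\<dots> \<le> Mr * (CQ * CI * L) * (\<bar>lam\<bar> / (2 * (Mr * (CQ * CI * L) + 1)))"
    using L unfolding delta_def L_def by (intro mult_left_mono) auto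
  also have "\<dots> \<le> \<bar>lam\<bar> / 2"
    using L by (simp add: field_simps)
  finally show ?thesis .
qed

end

context nystrom_problem
begin

lemma stable_discretisation:
  assumes h: "0 < hX" "hX < delta" "0 < hY" "hY < delta"
  shows "stable_nystrom_discretisation \<Omega> k lam (X hX) (Y hY) (nX hX) (nY hY) (w hY) (R hX hY)
    K0 CQ CI Mr (eps hX hY)"
proof unfold_locales
  show "\<forall>x\<in>closure \<Omega>. \<forall>l<nY hY. \<bar>Kh hX hY (\<lambda>j. k (X hX j, Y hY l)) x
      - integral \<Omega> (\<lambda>y. k (x, y) * k (y, Y hY l))\<bar> \<le> eps hX hY"
    using kernel_consistency h by blast
  show "0 \<le> eps hX hY"
    unfolding eps_def using h CQ_nonneg K0_nonneg CR_nonneg Cw_nonneg B_columns_nonneg B_products_nonneg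
      by simp
qed (use h eps_small bounded "open" Omega_nonempty k_cont k_bound X_closure Y_closure weights_bound R_bound
      CI_nonneg lam_nonzero Mr_nonneg resolvent_bound in auto)

abbreviation stability_const :: real where
  "stability_const \<equiv> nystrom_stability_const lam K0 CQ CI Mr"

definition error_const :: real where
  "error_const = (1 + CQ * (K0 * CI) * stability_const) / \<bar>lam\<bar> * (prod_const + 1)"

lemma stability_const_nonneg: "0 \<le> stability_const"
  unfolding nystrom_stability_const_def
  using CQ_nonneg K0_nonneg CI_nonneg Mr_nonneg by simp

lemma error_const_pos: "0 < error_const"
proof -
  have "0 < 1 + CQ * (K0 * CI) * stability_const"
    using CQ_nonneg K0_nonneg CI_nonneg stability_const_nonneg by (simp add: add_pos_nonneg)
  then show ?thesis unfolding error_const_def using lam_nonzero prod_const_nonneg by simp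
qed

lemma nystrom_small_mesh:
  assumes h: "0 < hX" "hX < delta" "0 < hY" "hY < delta"
  shows "let A = sysmat lam k (X hX) (Y hY) (nY hY) (w hY) (R hX hY) in
       (\<exists>uh. \<forall>i<nX hX. (\<Sum>j<nX hX. A i j * uh j) = f (X hX i))
     \<and> (\<forall>uh uh'. (\<forall>i<nX hX. (\<Sum>j<nX hX. A i j * uh j) = f (X hX i))
                \<and> (\<forall>i<nX hX. (\<Sum>j<nX hX. A i j * uh' j) = f (X hX i))
                \<longrightarrow> (\<forall>j<nX hX. uh j = uh' j))
     \<and> cond_inf (nX hX) A \<le> (\<bar>lam\<bar> + CQ * (K0 * CI)) * stability_const
     \<and> (\<forall>uh. (\<forall>i<nX hX. (\<Sum>j<nX hX. A i j * uh j) = f (X hX i)) \<longrightarrow>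
          (\<forall>x\<in>closure \<Omega>.
             \<bar>u x - nystrom lam k f (Y hY) (nY hY) (nX hX) (w hY) (R hX hY) uh x\<bar>
             \<le> error_const * (Cw * k_norm * hY ^ qw + CQ * CR * K0 * hX ^ qR) * u_norm))"
proof -
  interpret D: stable_nystrom_discretisation \<Omega> k lam "X hX" "Y hY" "nX hX" "nY hY" "w hY" "R hX hY"
      K0 CQ CI Mr "eps hX hY"
    using stable_discretisation[OF h] .
  have error: "\<bar>u x - nystrom lam k f (Y hY) (nY hY) (nX hX) (w hY) (R hX hY) uh x\<bar>
      \<le> error_const * (Cw * k_norm * hY ^ qw + CQ * CR * K0 * hX ^ qR) * u_norm"
    if uh: "\<forall>i<nX hX. (\<Sum>j<nX hX. D.A i j * uh j) = f (X hX i)" and x: "x \<in> closure \<Omega>" for uh x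
  proof -
    have "\<bar>u x - nystrom lam k f (Y hY) (nY hY) (nX hX) (w hY) (R hX hY) uh x\<bar>
        \<le> (1 + CQ * (K0 * CI) * stability_const) / \<bar>lam\<bar>
          * (Cw * hY ^ qw * (prod_const * k_norm * u_norm) + CQ * (K0 * (CR * hX ^ qR * u_norm)))"
      by (rule D.nystrom_error_le[OF uh residual_le[OF h(1,3)] x])
    also have "\<dots> \<le> (1 + CQ * (K0 * CI) * stability_const) / \<bar>lam\<bar>
          * ((prod_const + 1) * (Cw * k_norm * hY ^ qw + CQ * CR * K0 * hX ^ qR) * u_norm)"
      using h CQ_nonneg K0_nonneg CI_nonneg stability_const_nonneg
      by (intro mult_left_mono residual_bound_le) auto
    also have "\<dots> = error_const * (Cw * k_norm * hY ^ qw + CQ * CR * K0 * hX ^ qR) * u_norm"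
      unfolding error_const_def by (simp add: mult_ac)
    finally show ?thesis .
  qed
  have unique: "\<forall>j<nX hX. uh j = uh' j"
    if "(\<forall>i<nX hX. (\<Sum>j<nX hX. D.A i j * uh j) = f (X hX i))
      \<and> (\<forall>i<nX hX. (\<Sum>j<nX hX. D.A i j * uh' j) = f (X hX i))" for uh uh'
  proof -
    have "\<forall>i<nX hX. (\<Sum>j<nX hX. D.A i j * uh j) = (\<lambda>i. f (X hX i)) i"
      and "\<forall>i<nX hX. (\<Sum>j<nX hX. D.A i j * uh' j) = (\<lambda>i. f (X hX i)) i"
      using that by simp_all
    then show ?thesis by (rule D.sysmat_solution_unique)
  qed
  show ?thesis
    unfolding Let_def using D.sysmat_solvable D.sysmat_cond_inf_le unique error by simp
qed

lemma nystrom_convergence: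
  "\<exists>\<delta>>0. \<exists>C>0. \<exists>M. \<forall>hX hY. 0 < hX \<and> hX < \<delta> \<and> 0 < hY \<and> hY < \<delta> \<longrightarrow>
     (let A = sysmat lam k (X hX) (Y hY) (nY hY) (w hY) (R hX hY) in
       (\<exists>uh. \<forall>i<nX hX. (\<Sum>j<nX hX. A i j * uh j) = f (X hX i))
     \<and> (\<forall>uh uh'. (\<forall>i<nX hX. (\<Sum>j<nX hX. A i j * uh j) = f (X hX i))
                \<and> (\<forall>i<nX hX. (\<Sum>j<nX hX. A i j * uh' j) = f (X hX i))
                \<longrightarrow> (\<forall>j<nX hX. uh j = uh' j))
     \<and> cond_inf (nX hX) A \<le> M
     \<and> (\<forall>uh. (\<forall>i<nX hX. (\<Sum>j<nX hX. A i j * uh j) = f (X hX i)) \<longrightarrow>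
          (\<forall>x\<in>closure \<Omega>.
             \<bar>u x - nystrom lam k f (Y hY) (nY hY) (nX hX) (w hY) (R hX hY) uh x\<bar>
             \<le> C * (Cw * k_norm * hY ^ qw + CQ * CR * K0 * hX ^ qR) * u_norm)))"
  using delta_pos error_const_pos nystrom_small_mesh by (intro exI[of _ delta] exI[of _ error_const]) blast

end

theorem theorem3p10:
  fixes \<Omega> :: "'a::euclidean_space set"
    and q qw qR :: nat and lam :: real
    and k :: "'a \<times> 'a \<Rightarrow> real" and f u :: "'a \<Rightarrow> real"
    and Y :: "real \<Rightarrow> nat \<Rightarrow> 'a" and nY :: "real \<Rightarrow> nat" and w :: "real \<Rightarrow> nat \<Rightarrow> real"
    and X :: "real \<Rightarrow> nat \<Rightarrow> 'a" and nX :: "real \<Rightarrow> nat"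
    and R :: "real \<Rightarrow> real \<Rightarrow> nat \<Rightarrow> nat \<Rightarrow> real"
    and CQ Cw CR :: real
  assumes "bounded \<Omega>" and "open \<Omega>"
    and "q \<ge> 1" and "lam \<noteq> 0"
    and "Cm (\<Omega> \<times> \<Omega>) q k"
    and "Cm \<Omega> q f" and "\<exists>x\<in>closure \<Omega>. f x \<noteq> 0"
    and "notin_spectrum \<Omega> k lam"
    and "Cm \<Omega> q u"
    and "\<forall>x\<in>\<Omega>. lam * u x - integral \<Omega> (\<lambda>y. k (x, y) * u y) = f x"
    \<comment> \<open>quadrature scheme\<close>
    and "\<forall>hY>0. \<forall>i<nY hY. Y hY i \<in> closure \<Omega>"
    and "\<forall>hY>0. inj_on (Y hY) {..<nY hY}"
    and "filterlim nY at_top (at_right 0)"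
    and "\<forall>hY>0. (\<Sum>i<nY hY. \<bar>w hY i\<bar>) \<le> CQ"
    and "0 < qw" and "qw \<le> q"
    and "\<forall>hY>0. \<forall>v. Cm \<Omega> qw v \<longrightarrow>
           \<bar>integral \<Omega> v - (\<Sum>i<nY hY. w hY i * v (Y hY i))\<bar> \<le> Cw * hY ^ qw * cmnorm \<Omega> qw v"
    \<comment> \<open>reconstruction scheme\<close>
    and "\<forall>hX>0. \<forall>j<nX hX. X hX j \<in> closure \<Omega>"
    and "\<forall>hX>0. inj_on (X hX) {..<nX hX}"
    and "\<exists>CI. \<forall>hX>0. \<forall>hY>0. \<forall>i<nY hY. (\<Sum>j<nX hX. \<bar>R hX hY i j\<bar>) \<le> CI"
    and "0 < qR" and "qR \<le> q"
    and "\<forall>hX>0. \<forall>hY>0. \<forall>v. Cm \<Omega> qR v \<longrightarrow> (\<forall>i<nY hY.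
           \<bar>v (Y hY i) - (\<Sum>j<nX hX. R hX hY i j * v (X hX j))\<bar> \<le> CR * hX ^ qR * cmnorm \<Omega> qR v)"
  shows "\<exists>\<delta>>0. \<exists>C>0. \<exists>M. \<forall>hX hY. 0 < hX \<and> hX < \<delta> \<and> 0 < hY \<and> hY < \<delta> \<longrightarrow>
     (let A = sysmat lam k (X hX) (Y hY) (nY hY) (w hY) (R hX hY) in
       (\<exists>uh. \<forall>i<nX hX. (\<Sum>j<nX hX. A i j * uh j) = f (X hX i))
     \<and> (\<forall>uh uh'. (\<forall>i<nX hX. (\<Sum>j<nX hX. A i j * uh j) = f (X hX i))
                \<and> (\<forall>i<nX hX. (\<Sum>j<nX hX. A i j * uh' j) = f (X hX i))
                \<longrightarrow> (\<forall>j<nX hX. uh j = uh' j))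
     \<and> cond_inf (nX hX) A \<le> M
     \<and> (\<forall>uh. (\<forall>i<nX hX. (\<Sum>j<nX hX. A i j * uh j) = f (X hX i)) \<longrightarrow>
          (\<forall>x\<in>closure \<Omega>.
             \<bar>u x - nystrom lam k f (Y hY) (nY hY) (nX hX) (w hY) (R hX hY) uh x\<bar>
             \<le> C * (Cw * (SUP x'\<in>closure \<Omega>. cmnorm \<Omega> q (\<lambda>y. k (x', y))) * hY ^ qw
                     + CQ * CR * cmnorm (\<Omega> \<times> \<Omega>) 0 k * hX ^ qR) * cmnorm \<Omega> q u)))"
proof -
  obtain CI where CI: "0 \<le> CI" "\<forall>hX>0. \<forall>hY>0. \<forall>i<nY hY. (\<Sum>j<nX hX. \<bar>R hX hY i j\<bar>) \<le> CI"
    using assms(20) by (meson max.cobounded1 max.cobounded2 order_trans)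
  obtain Mr where "0 \<le> Mr" and "\<And>v B. continuous_on (closure \<Omega>) v
      \<Longrightarrow> \<forall>x\<in>closure \<Omega>. \<bar>intop \<Omega> k lam v x\<bar> \<le> B \<Longrightarrow> \<forall>x\<in>closure \<Omega>. \<bar>v x\<bar> \<le> Mr * B"
    using notin_spectrum_resolvent_bound[OF assms(8,1)] by blast
  then interpret nystrom_problem \<Omega> k lam f u q qw qR Y nY w X nX R CQ Cw CR CI Mr
    using assms(1,2,4-7,9-11,13-18,21-23) CI by unfold_locales (auto simp: Cm_def)
  show ?thesis using nystrom_convergence by (simp add: mult.assoc)
qed

end
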